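(* Let $\beta,\rho>0$ and $y\in\mathbb{R}^n$. Then the multifunction $\mathcal M$ is nonempty, compact valued and upper-semicontinuous. For any $M\in\mathcal M(y)$, both $M$ and $I_n-M$ are symmetric and positive semidefinite. Moreover, there exists a neighborhood $\mathcal Y$ of $y$ such that for all $u\in\mathcal Y$, \[ \mathrm{Prox}_p(u)-\mathrm{Prox}_p(y)-M(u-y)=0\quad\forall M\in\mathcal M(u). \]
   Context: $p(x):=\beta\|x\|_1+\rho\sum_{1\le i<j\le n}|x_i-x_j|$ and $\mathrm{Prox}_p(y):=\operatorname{argmin}_x\{\tfrac12\|x-y\|^2+p(x)\}$. $S_\rho(y):=\operatorname{argmin}_x\{\tfrac12\|x-y\|^2+\rho\sum_{i<j}|x_i-x_j|\}$; it is known that $\mathrm{Prox}_p(y)=\mathrm{Prox}_{\beta\|\cdot\|_1}(S_\rho(y))$. $w\in\mathbb{R}^n$, $w_k=n-2k+1$. $\mathcal D:=\{x: x_1\ge\cdots\ge x_n\}$, $\Pi_{\mathcal D}$ the Euclidean projection. $B\in\mathbb{R}^{(n-1)\times n}$ with $Bx=(x_1-x_2,\dots,x_{n-1}-x_n)^T$, $B_i$ its $i$-th row, $B_K$ rows indexed by $K$. For each $y$, $P_y$ is a fixed permutation matrix such that $P_yy$ has non-increasing components. For $v\in\mathbb{R}^n$: $\mathcal M_{\mathcal D}(v)$ is the set of $\lambda\in\mathbb{R}^{n-1}$ with $\Pi_{\mathcal D}(v)-v+B^T\lambda=0$, $B\Pi_{\mathcal D}(v)\ge0$, $\lambda\le0$,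 $\lambda^TB\Pi_{\mathcal D}(v)=0$; $\mathcal I_{\mathcal D}(v):=\{i: B_i\Pi_{\mathcal D}(v)=0\}$; $\mathcal K_{\mathcal D}(v):=\{K\subseteq\{1,\dots,n-1\}:\exists\lambda\in\mathcal M_{\mathcal D}(v),\ \mathrm{supp}(\lambda)\subseteq K\subseteq\mathcal I_{\mathcal D}(v),\ B_K\text{ full row rank}\}$; $\mathcal Q_{\mathcal D}(v):=\{I_n-B_K^T(B_KB_K^T)^{-1}B_K:K\in\mathcal K_{\mathcal D}(v)\}$; $\mathcal Q_{S_\rho}(y):=\{P_y^T\widehat QP_y:\widehat Q\in\mathcal Q_{\mathcal D}(P_yy-\rho w)\}$. For $\eta\in\mathbb{R}^n$, $\partial_B\mathrm{Prox}_{\beta\|\cdot\|_1}(\eta)$ is the set of diagonal matrices $\mathrm{Diag}(q)$ with $q_i=0$ if $|\eta_i|<\beta$, $q_i\in\{0,1\}$ if $|\eta_i|=\beta$, $q_i=1$ if $|\eta_i|>\beta$. Finally $\mathcal M(y):=\{M\in\mathcal S^n: M=\Theta Q,\ \Theta\in\partial_B\mathrm{Prox}_{\beta\|\cdot\|_1}(S_\rho(y)),\ Q\in\mathcal Q_{S_\rho}(y)\}$, where $\mathcal S^n$ is the set of symmetric $n\times n$ matrices. *)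

theory Defs
  imports "HOL-Analysis.Analysis"
begin

text \<open>Components of R^n are indexed by a finite, well-ordered type 'n; the order of
  'n gives the positions 1..n. The i-th position of an index i is card {j. j < i} + 1.\<close>

definition l1norm :: "real^'n::{finite,wellorder} \<Rightarrow> real" where
  "l1norm x = (\<Sum>i\<in>UNIV. \<bar>x$i\<bar>)"

definition pairpen :: "real^'n::{finite,wellorder} \<Rightarrow> real" where
  "pairpen x = (\<Sum>i\<in>UNIV. \<Sum>j\<in>{j. i < j}. \<bar>x$i - x$j\<bar>)"

definition penp :: "real \<Rightarrow> real \<Rightarrow> real^'n::{finite,wellorder} \<Rightarrow> real" where
  "penp \<beta> \<rho> x = \<beta> * l1norm x + \<rho> * pairpen x"

definition prox :: "(real^'n::{finite,wellorder} \<Rightarrow> real) \<Rightarrow> real^'n::{finite,wellorder} \<Rightarrow> real^'n::{finite,wellorder}" where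
  "prox f y = (SOME x. \<forall>z. (1/2) * (norm (x - y))\<^sup>2 + f x \<le> (1/2) * (norm (z - y))\<^sup>2 + f z)"

definition Sfun :: "real \<Rightarrow> real^'n::{finite,wellorder} \<Rightarrow> real^'n::{finite,wellorder}" where
  "Sfun \<rho> y = prox (\<lambda>x. \<rho> * pairpen x) y"

definition wvec :: "real^'n::{finite,wellorder}" where
  "wvec = (\<chi> i. real CARD('n) - 2 * real (card {j. j < i}) - 1)"

definition Dset :: "(real^'n::{finite,wellorder}) set" where
  "Dset = {x. \<forall>i j. i \<le> j \<longrightarrow> x$j \<le> x$i}"

definition projD :: "real^'n::{finite,wellorder} \<Rightarrow> real^'n::{finite,wellorder}" where
  "projD v = closest_point Dset v"

text \<open>Rows of B are indexed by the non-maximal indices i (positions 1..n-1);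
  row i is e_i - e_(next i).\<close>
definition brows :: "'n::{finite,wellorder} set" where
  "brows = {i. i < Max UNIV}"

definition nxt :: "'n::{finite,wellorder} \<Rightarrow> 'n::{finite,wellorder}" where
  "nxt i = (LEAST j. i < j)"

definition Brow :: "'n::{finite,wellorder} \<Rightarrow> real^'n::{finite,wellorder}" where
  "Brow i = (\<chi> j. if j = i then 1 else if j = nxt i then -1 else 0)"

text \<open>B_K padded with zero rows outside K (so it is an n x n matrix).\<close>
definition BK :: "'n::{finite,wellorder} set \<Rightarrow> real^'n::{finite,wellorder}^'n::{finite,wellorder}" where
  "BK K = (\<chi> i. if i \<in> K then Brow i else 0)"

text \<open>I - B_K^T (B_K B_K^T)^{-1} B_K. The K x K Gram matrix B_K B_K^T is padded with
  the identity on the complement of K, which leaves the product unchanged.\<close>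
definition projK :: "'n::{finite,wellorder} set \<Rightarrow> real^'n::{finite,wellorder}^'n::{finite,wellorder}" where
  "projK K = mat 1 - transpose (BK K) **
      matrix_inv (BK K ** transpose (BK K) + (\<chi> i j. if i = j \<and> i \<notin> K then 1 else 0)) ** BK K"

text \<open>Multipliers lambda in R^(n-1) are represented as vectors in R^n vanishing at the
  maximal index.\<close>
definition MD :: "real^'n::{finite,wellorder} \<Rightarrow> (real^'n::{finite,wellorder}) set" where
  "MD v = {lam. lam $ (Max UNIV) = 0 \<and>
     projD v - v + (\<Sum>i\<in>brows. lam$i *\<^sub>R Brow i) = 0 \<and>
     (\<forall>i\<in>brows. Brow i \<bullet> projD v \<ge> 0) \<and>
     (\<forall>i\<in>brows. lam$i \<le> 0) \<and>
     (\<Sum>i\<in>brows. lam$i * (Brow i \<bullet> projD v)) = 0}"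

definition ID :: "real^'n::{finite,wellorder} \<Rightarrow> 'n::{finite,wellorder} set" where
  "ID v = {i\<in>brows. Brow i \<bullet> projD v = 0}"

definition KD :: "real^'n::{finite,wellorder} \<Rightarrow> 'n::{finite,wellorder} set set" where
  "KD v = {K. \<exists>lam\<in>MD v. {i. lam$i \<noteq> 0} \<subseteq> K \<and> K \<subseteq> ID v \<and> rank (BK K) = card K}"

definition QD :: "real^'n::{finite,wellorder} \<Rightarrow> (real^'n::{finite,wellorder}^'n::{finite,wellorder}) set" where
  "QD v = projK ` KD v"

definition permmat :: "('n::{finite,wellorder} \<Rightarrow> 'n::{finite,wellorder}) \<Rightarrow> real^'n::{finite,wellorder}^'n::{finite,wellorder}" where
  "permmat \<sigma> = (\<chi> i j. if \<sigma> i = j then 1 else 0)"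

text \<open>sigma y is the fixed permutation with (P_y y)_i = y_(sigma y i).\<close>
definition QS :: "real \<Rightarrow> (real^'n::{finite,wellorder} \<Rightarrow> 'n::{finite,wellorder} \<Rightarrow> 'n::{finite,wellorder}) \<Rightarrow> real^'n::{finite,wellorder} \<Rightarrow> (real^'n::{finite,wellorder}^'n::{finite,wellorder}) set" where
  "QS \<rho> \<sigma> y = {transpose (permmat (\<sigma> y)) ** Qh ** permmat (\<sigma> y) | Qh.
       Qh \<in> QD (permmat (\<sigma> y) *v y - \<rho> *\<^sub>R wvec)}"

definition dBprox_l1 :: "real \<Rightarrow> real^'n::{finite,wellorder} \<Rightarrow> (real^'n::{finite,wellorder}^'n::{finite,wellorder}) set" where
  "dBprox_l1 \<beta> \<eta> = {(\<chi> i j. if i = j then q i else 0) | q.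
      \<forall>i. (\<bar>\<eta>$i\<bar> < \<beta> \<longrightarrow> q i = 0) \<and> (\<bar>\<eta>$i\<bar> = \<beta> \<longrightarrow> q i \<in> {0,1}) \<and> (\<bar>\<eta>$i\<bar> > \<beta> \<longrightarrow> q i = 1)}"

definition Mset :: "real \<Rightarrow> real \<Rightarrow> (real^'n::{finite,wellorder} \<Rightarrow> 'n::{finite,wellorder} \<Rightarrow> 'n::{finite,wellorder}) \<Rightarrow> real^'n::{finite,wellorder} \<Rightarrow> (real^'n::{finite,wellorder}^'n::{finite,wellorder}) set" where
  "Mset \<beta> \<rho> \<sigma> y = {\<Theta> ** Q | \<Theta> Q. \<Theta> \<in> dBprox_l1 \<beta> (Sfun \<rho> y) \<and> Q \<in> QS \<rho> \<sigma> y \<and>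
       transpose (\<Theta> ** Q) = \<Theta> ** Q}"

definition psd :: "real^'n::{finite,wellorder}^'n::{finite,wellorder} \<Rightarrow> bool" where
  "psd A = (\<forall>x. 0 \<le> x \<bullet> (A *v x))"

end

theory Submission
  imports Defs
begin

text \<open>
  If a permutation \<open>P\<close> sorts \<open>y\<close> decreasingly, then on the monotone cone \<open>D\<close> the pairwise
  penalty is the linear functional \<open>\<langle>w, x\<rangle>\<close>, and the rearrangement inequality
  gives \<open>S\<^sub>\<rho>(y) = P\<^sup>T \<Pi>\<^sub>D(P y - \<rho> w)\<close>; soft-thresholding \<open>S\<^sub>\<rho>(y)\<close> gives \<open>Prox\<^sub>p(y)\<close>.
  The multiplier of \<open>\<Pi>\<^sub>D\<close> is unique (the partial sums of the residual), so the admissible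
  index sets \<open>K\<close> are those between its support and the active set, and for each of them
  \<open>I - B\<^sub>K\<^sup>T(B\<^sub>K B\<^sub>K\<^sup>T)\<^sup>-\<^sup>1B\<^sub>K\<close> maps \<open>v\<close> to \<open>\<Pi>\<^sub>D(v)\<close>. A symmetric product of this projector
  with a diagonal 0/1 matrix is a product of commuting orthogonal projections, hence an
  orthogonal projection, and there are finitely many such products.

  Near \<open>y\<close>, a permutation sorting \<open>u\<close> still sorts \<open>y\<close>, the support of the multiplier can only
  grow, the active set can only shrink, and soft-thresholding is linear with the slope of any
  of its B-Jacobians at the perturbed point. Hence \<open>\<M>(u) \<subseteq> \<M>(y)\<close> and \<open>Prox\<^sub>p\<close> is
  exactly affine from \<open>y\<close> to \<open>u\<close>. Since \<open>w\<close> drops by 2 between neighbours, every tie of the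
  sorted \<open>y\<close> lies in the support of the multiplier, which makes \<open>P\<^sup>T Q P\<close> independent of the
  choice of the sorting permutation.
\<close>

section \<open>The rows of \<open>B\<close>\<close>

lemma le_Max_UNIV: "(i::'a::{finite,linorder}) \<le> Max UNIV"
  by (simp add: Max_ge)

lemma brows_iff: "(i::'n::{finite,wellorder}) \<in> brows \<longleftrightarrow> i \<noteq> Max UNIV"
  unfolding brows_def using le_Max_UNIV[of i] by (auto simp: order_le_neq_trans)

lemma less_nxt: "(i::'n::{finite,wellorder}) \<in> brows \<Longrightarrow> i < nxt i"
  unfolding nxt_def brows_def by (rule LeastI[of _ "Max UNIV"]) simp

lemma nxt_le: "(i::'n::{finite,wellorder}) < j \<Longrightarrow> nxt i \<le> j"
  unfolding nxt_def by (rule Least_le)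

lemma less_nxt_iff: "(k::'n::{finite,wellorder}) \<in> brows \<Longrightarrow> j < nxt k \<longleftrightarrow> j \<le> k"
  using less_nxt[of k] nxt_le[of k j] by (auto simp: not_le[symmetric])

lemma ex_nxt_eq:
  assumes "(i::'n::{finite,wellorder}) < j"
  shows "\<exists>p. i \<le> p \<and> p \<in> brows \<and> nxt p = j"
proof -
  define p where "p = Max {q. q < j}"
  have "{q. q < j} \<noteq> {}" using assms by auto
  then have "p < j" "i \<le> p"
    using assms Max_in[of "{q. q < j}"] by (auto simp: p_def)
  moreover have p: "p \<in> brows"
    using \<open>p < j\<close> le_Max_UNIV[of j] by (auto simp: brows_iff)
  moreover have "nxt p = j"
  proof (rule antisym)
    show "nxt p \<le> j" using nxt_le[OF \<open>p < j\<close>] .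
    show "j \<le> nxt p"
    proof (rule ccontr)
      assume "\<not> j \<le> nxt p"
      then have "nxt p \<le> p" by (simp add: p_def Max_ge)
      with less_nxt[OF p] show False by simp
    qed
  qed
  ultimately show ?thesis by blast
qed

lemma Brow_nth: "Brow i $ j = (if j = i then 1 else if j = nxt i then -1 else 0)"
  unfolding Brow_def by simp

lemma Brow_inner:
  assumes "(i::'n::{finite,wellorder}) \<in> brows"
  shows "Brow i \<bullet> x = x$i - x$nxt i"
proof -
  have "Brow i \<bullet> x = (\<Sum>j\<in>UNIV. (if j = i then x$j else 0) - (if j = nxt i then x$j else 0))"
    unfolding inner_vec_def using less_nxt[OF assms] by (intro sum.cong) (auto simp: Brow_nth)
  then show ?thesis by (simp add: sum_subtractf)
qed

definition Bt :: "('n::{finite,wellorder} \<Rightarrow> real) \<Rightarrow> real^'n::{finite,wellorder}" where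
  "Bt c = (\<Sum>i\<in>brows. c i *\<^sub>R Brow i)"

definition psum :: "real^'n::{finite,wellorder} \<Rightarrow> 'n \<Rightarrow> real" where
  "psum x k = (\<Sum>j\<in>{..k}. x$j)"

lemma sum_atMost_Brow:
  assumes "(i::'n::{finite,wellorder}) \<in> brows"
  shows "(\<Sum>j\<in>{..k}. Brow i $ j) = (if i = k then 1 else 0)"
proof -
  have "(\<Sum>j\<in>{..k}. Brow i $ j) = (\<Sum>j\<in>{..k}. (if j = i then 1 else 0) - (if j = nxt i then 1 else 0))"
    using less_nxt[OF assms] by (intro sum.cong) (auto simp: Brow_nth)
  also have "\<dots> = (if i \<le> k then 1 else 0) - (if nxt i \<le> k then 1 else 0)"
    by (simp add: sum_subtractf)
  also have "nxt i \<le> k \<longleftrightarrow> i < k"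
    using less_nxt_iff[OF assms, of k] by auto
  finally show ?thesis by auto
qed

lemma psum_Bt: "psum (Bt c) k = (if k \<in> brows then c k else 0)"
proof -
  have "psum (Bt c) k = (\<Sum>i\<in>brows. c i * (\<Sum>j\<in>{..k}. Brow i $ j))"
    unfolding psum_def Bt_def by (simp add: sum_component sum_distrib_left sum.swap[of _ "{..k}"])
  also have "\<dots> = (\<Sum>i\<in>brows. if i = k then c i else 0)"
    by (intro sum.cong) (auto simp: sum_atMost_Brow)
  finally show ?thesis by (simp add: sum.delta')
qed

lemma vec_eq_psumI:
  assumes "\<And>k. psum a k = psum b (k::'n::{finite,wellorder})"
  shows "a = b"
proof -
  have "a$k = b$k" for k
  proof (induction k rule: less_induct)
    case (less k)
    have "{..k} = insert k {..<k}" by auto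
    then have "psum x k = x$k + (\<Sum>j\<in>{..<k}. x$j)" for x :: "real^'n::{finite,wellorder}"
      by (simp add: psum_def)
    moreover have "(\<Sum>j\<in>{..<k}. a$j) = (\<Sum>j\<in>{..<k}. b$j)"
      using less by (intro sum.cong) auto
    ultimately show ?case using assms[of k] by simp
  qed
  then show ?thesis by (simp add: vec_eq_iff)
qed

lemma Bt_psum:
  assumes "(\<Sum>i\<in>UNIV. x$i) = 0"
  shows "Bt (psum x) = x"
proof (rule vec_eq_psumI)
  fix k
  show "psum (Bt (psum x)) k = psum x k"
  proof (cases "k \<in> brows")
    case False
    then have "{..k} = UNIV" using le_Max_UNIV by (auto simp: brows_iff)
    then have "psum x k = 0" using assms by (simp add: psum_def)
    with False show ?thesis by (simp add: psum_Bt)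
  qed (simp add: psum_Bt)
qed

lemma Bt_eqD: "Bt c = Bt c' \<Longrightarrow> (k::'n::{finite,wellorder}) \<in> brows \<Longrightarrow> c k = c' k"
  using psum_Bt[of c k] psum_Bt[of c' k] by simp

lemma Bt_eq_0_iff: "Bt c = 0 \<longleftrightarrow> (\<forall>k\<in>(brows::'n::{finite,wellorder} set). c k = 0)"
  using Bt_eqD[of c "\<lambda>_. 0"] by (auto simp: Bt_def)

lemma inner_Bt: "Bt c \<bullet> x = (\<Sum>i\<in>brows. c i * (Brow i \<bullet> x))"
  unfolding Bt_def by (simp add: inner_sum_left)

section \<open>Projection onto the monotone cone\<close>

lemma Dset_iff: "x \<in> Dset \<longleftrightarrow> (\<forall>i j. i \<le> j \<longrightarrow> x$j \<le> x$i)"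
  unfolding Dset_def by simp

lemma closed_Dset: "closed Dset"
proof -
  have "closed {x::real^'n::{finite,wellorder}. i \<le> j \<longrightarrow> x$j \<le> x$i}" for i j
    by (cases "i \<le> j") (auto intro!: closed_Collect_le continuous_intros)
  then show ?thesis unfolding Dset_def by (intro closed_Collect_all) auto
qed

lemma convex_Dset: "convex Dset"
  unfolding convex_def by (auto simp: Dset_iff intro!: add_mono mult_left_mono)

lemma zero_in_Dset: "0 \<in> Dset"
  by (simp add: Dset_iff)

lemma Dset_add: "x \<in> Dset \<Longrightarrow> y \<in> Dset \<Longrightarrow> x + y \<in> Dset"
  by (auto simp: Dset_iff intro: add_mono)

lemma projD_in_Dset: "projD v \<in> Dset"
  unfolding projD_def using closest_point_in_set closed_Dset zero_in_Dset by blast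

lemma projD_lipschitz: "norm (projD a - projD b) \<le> norm (a - b)"
  using closest_point_lipschitz[OF convex_Dset closed_Dset] zero_in_Dset
  unfolding projD_def dist_norm by blast

lemma projD_inner_le: "t \<in> Dset \<Longrightarrow> (v - projD v) \<bullet> (t - projD v) \<le> 0"
  unfolding projD_def by (rule closest_point_dot[OF convex_Dset closed_Dset])

text \<open>\<open>Dset\<close> is a convex cone, so the residual is normal to it.\<close>

lemma residual_inner_le:
  assumes "d \<in> Dset" shows "(v - projD v) \<bullet> d \<le> 0"
  using projD_inner_le[OF Dset_add[OF projD_in_Dset[of v] assms], of v] by simp

lemma residual_inner_projD: "(v - projD v) \<bullet> projD v = 0"
  using projD_inner_le[OF zero_in_Dset, of v] residual_inner_le[OF projD_in_Dset[of v], of v]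
  by (simp add: inner_diff_right)

lemma residual_psum_nonpos: "psum (v - projD v) k \<le> 0"
proof -
  have "psum (v - projD v) k = (v - projD v) \<bullet> (\<chi> j. if j \<le> k then 1 else 0)"
    unfolding inner_vec_def psum_def by (simp add: if_distrib sum.If_cases atMost_def)
  also have "\<dots> \<le> 0" by (rule residual_inner_le) (auto simp: Dset_iff)
  finally show ?thesis .
qed

lemma residual_sum_lessThan_nonpos: "(\<Sum>j\<in>{..<k}. (v - projD v) $ j) \<le> 0"
proof -
  have "(\<Sum>j\<in>{..<k}. (v - projD v) $ j) = (v - projD v) \<bullet> (\<chi> j. if j < k then 1 else 0)"
    unfolding inner_vec_def by (simp add: if_distrib sum.If_cases lessThan_def)
  also have "\<dots> \<le> 0" by (rule residual_inner_le) (auto simp: Dset_iff)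
  finally show ?thesis .
qed

lemma sum_residual_eq_0: "(\<Sum>i\<in>UNIV. (v - projD v) $ i) = 0"
proof -
  have "(v - projD v) \<bullet> (\<chi> i. c) \<le> 0" for c
    by (rule residual_inner_le) (simp add: Dset_iff)
  from this[of 1] this[of "-1"]
  have "(\<Sum>i\<in>UNIV. (v - projD v) $ i) \<le> 0" "- (\<Sum>i\<in>UNIV. (v - projD v) $ i) \<le> 0"
    unfolding inner_vec_def by (simp_all add: sum_negf sum_subtractf)
  then show ?thesis by linarith
qed

definition multD :: "real^'n::{finite,wellorder} \<Rightarrow> real^'n::{finite,wellorder}" where
  "multD v = (\<chi> k. psum (v - projD v) k)"

lemma multD_nonpos: "multD v $ k \<le> 0"
  by (simp add: multD_def residual_psum_nonpos)

lemma multD_Max: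
  fixes v :: "real^'n::{finite,wellorder}"
  shows "multD v $ Max UNIV = 0"
proof -
  have "{..Max UNIV} = (UNIV::'n::{finite,wellorder} set)" using le_Max_UNIV by auto
  then show ?thesis using sum_residual_eq_0[of v] by (simp add: multD_def psum_def)
qed

lemma Bt_multD: "Bt (($) (multD v)) = v - projD v"
proof -
  have "($) (multD v) = psum (v - projD v)" by (simp add: multD_def fun_eq_iff)
  then show ?thesis using Bt_psum[OF sum_residual_eq_0] by simp
qed

lemma Brow_projD_nonneg: "i \<in> brows \<Longrightarrow> 0 \<le> Brow i \<bullet> projD v"
  using projD_in_Dset[of v] less_nxt[of i] by (simp add: Brow_inner Dset_iff)

lemma multD_complementary: "(\<Sum>i\<in>brows. multD v $ i * (Brow i \<bullet> projD v)) = 0"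
  using inner_Bt[of "($) (multD v)" "projD v"] residual_inner_projD[of v] by (simp add: Bt_multD)

lemma MD_eq: "MD v = {multD v}"
proof
  show "{multD v} \<subseteq> MD v"
    unfolding MD_def
    using multD_Max[of v] Bt_multD[of v] multD_complementary[of v] Brow_projD_nonneg[of _ v]
      multD_nonpos[of v]
    by (simp add: Bt_def)
  show "MD v \<subseteq> {multD v}"
  proof
    fix lam assume "lam \<in> MD v"
    then have "Bt (($) lam) = Bt (($) (multD v))" "lam $ Max UNIV = 0"
      unfolding MD_def Bt_def by (auto simp: Bt_multD[unfolded Bt_def] algebra_simps)
    then have "lam $ k = multD v $ k" for k
      using Bt_eqD[of "($) lam" "($) (multD v)" k] multD_Max[of v]
      by (cases "k \<in> brows") (auto simp: brows_iff)
    then show "lam \<in> {multD v}" by (simp add: vec_eq_iff)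
  qed
qed

lemma multD_nonzero_in_ID:
  assumes "multD v $ i \<noteq> 0"
  shows "i \<in> ID v"
proof -
  have i: "i \<in> brows" using assms multD_Max[of v] by (auto simp: brows_iff)
  have "\<forall>j\<in>brows. 0 \<le> - (multD v $ j * (Brow j \<bullet> projD v))"
    using multD_nonpos[of v] Brow_projD_nonneg[of _ v] by (simp add: mult_nonpos_nonneg)
  then have "\<forall>j\<in>brows. multD v $ j * (Brow j \<bullet> projD v) = 0"
    using sum_nonneg_eq_0_iff[of brows "\<lambda>j. - (multD v $ j * (Brow j \<bullet> projD v))"]
      multD_complementary[of v] by (simp add: sum_negf)
  then have "Brow i \<bullet> projD v = 0" using i assms by auto
  then show ?thesis using i by (simp add: ID_def)
qed

lemma multD_lipschitz:
  fixes a b :: "real^'n::{finite,wellorder}"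
  shows "\<bar>multD a $ k - multD b $ k\<bar> \<le> 2 * real CARD('n) * norm (a - b)"
proof -
  have "\<bar>multD a $ k - multD b $ k\<bar> = \<bar>\<Sum>j\<in>{..k}. (a - b)$j - (projD a - projD b)$j\<bar>"
    unfolding multD_def psum_def by (simp add: sum_subtractf[symmetric] algebra_simps)
  also have "\<dots> \<le> (\<Sum>j\<in>{..k}. \<bar>(a - b)$j - (projD a - projD b)$j\<bar>)"
    by (rule sum_abs)
  also have "\<dots> \<le> (\<Sum>j\<in>{..k}. 2 * norm (a - b))"
  proof (rule sum_mono)
    fix j
    have "\<bar>(a - b)$j\<bar> \<le> norm (a - b)" "\<bar>(projD a - projD b)$j\<bar> \<le> norm (projD a - projD b)"
      by (rule component_le_norm_cart)+
    with projD_lipschitz[of a b]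
    show "\<bar>(a - b)$j - (projD a - projD b)$j\<bar> \<le> 2 * norm (a - b)" by linarith
  qed
  also have "\<dots> \<le> (\<Sum>j\<in>(UNIV::'n set). 2 * norm (a - b))"
    by (rule sum_mono2) auto
  finally show ?thesis by simp
qed

text \<open>The projection must flatten an increase of \<open>v\<close> from \<open>k\<close> to its successor, and this
  forces a nonzero multiplier at \<open>k\<close>.\<close>

lemma multD_nonzero_of_less:
  assumes k: "k \<in> brows" and less: "v $ k < v $ nxt k"
  shows "multD v $ k \<noteq> 0"
proof
  assume zero: "multD v $ k = 0"
  have "j \<le> nxt k \<longleftrightarrow> j = nxt k \<or> j \<le> k" for j
    using less_nxt_iff[OF k, of j] by (metis order_le_less)
  then have "{..nxt k} = insert (nxt k) {..k}" by auto
  moreover have "nxt k \<notin> {..k}" using less_nxt[OF k] by auto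
  ultimately have "multD v $ nxt k = (v - projD v) $ nxt k + multD v $ k"
    by (simp add: multD_def psum_def)
  then have up: "v $ nxt k \<le> projD v $ nxt k"
    using zero multD_nonpos[of v "nxt k"] by simp
  have "{..k} = insert k {..<k}" by auto
  then have "multD v $ k = (v - projD v) $ k + (\<Sum>j\<in>{..<k}. (v - projD v) $ j)"
    by (simp add: multD_def psum_def)
  then have down: "projD v $ k \<le> v $ k"
    using zero residual_sum_lessThan_nonpos[of v k] by simp
  have "projD v $ nxt k \<le> projD v $ k"
    using projD_in_Dset[of v] less_nxt[OF k] by (simp add: Dset_iff)
  with up down less show False by simp
qed

section \<open>Orthogonal projection matrices\<close>

declare transpose_matrix_vector[simp del]

lemma transpose_add: "transpose (A + B) = transpose A + transpose (B::'a::semiring_1^'n^'m)"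
  by (simp add: transpose_def vec_eq_iff)

lemma transpose_diff: "transpose (A - B) = transpose A - transpose (B::'a::ring_1^'n^'m)"
  by (simp add: transpose_def vec_eq_iff)

lemma inner_transpose_mv: "(transpose A *v x) \<bullet> z = x \<bullet> (A *v (z::real^_))"
  by (simp add: transpose_matrix_vector dot_lmul_matrix)

lemma inner_symmetric_mv: "transpose A = A \<Longrightarrow> (A *v x) \<bullet> z = x \<bullet> (A *v (z::real^_))"
  using inner_transpose_mv[of A x z] by simp

lemma symmetric_if_inner:
  fixes A :: "real^'n^'n"
  assumes "\<And>x z. (A *v x) \<bullet> z = x \<bullet> (A *v z)"
  shows "transpose A = A"
proof -
  have "(transpose A *v x - A *v x) \<bullet> z = 0" for x z
    using assms[of x z] inner_transpose_mv[of A x z] by (simp add: inner_diff_left)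
  then have "transpose A *v x = A *v x" for x
    by (metis inner_eq_zero_iff right_minus_eq)
  then show ?thesis by (simp add: matrix_eq)
qed

lemma matrix_eq_by_mv: "(\<And>x. A *v (B *v x) = C *v x) \<Longrightarrow> A ** B = (C::'a::comm_semiring_1^'n^'m)"
  by (simp add: matrix_eq matrix_vector_mul_assoc)

lemma mv_idem: "A ** A = A \<Longrightarrow> A *v (A *v x) = A *v x"
  by (simp add: matrix_vector_mul_assoc)

lemma matrix_inv_mult:
  assumes "invertible (A::real^'n^'n)"
  shows "A ** matrix_inv A = mat 1" "matrix_inv A ** A = mat 1"
proof -
  have "\<exists>A'. A ** A' = mat 1 \<and> A' ** A = mat 1" using assms unfolding invertible_def by auto
  then have "A ** matrix_inv A = mat 1 \<and> matrix_inv A ** A = mat 1"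
    unfolding matrix_inv_def by (rule someI_ex)
  then show "A ** matrix_inv A = mat 1" "matrix_inv A ** A = mat 1" by auto
qed

lemma transpose_matrix_inv:
  assumes "invertible (A::real^'n^'n)" "transpose A = A"
  shows "transpose (matrix_inv A) = matrix_inv A"
proof -
  have "A ** transpose (matrix_inv A) = mat 1"
    using arg_cong[OF matrix_inv_mult(2)[OF assms(1)], of transpose] assms(2)
    by (simp add: matrix_transpose_mul)
  then have "matrix_inv A ** (A ** transpose (matrix_inv A)) = matrix_inv A" by simp
  then show ?thesis by (simp add: matrix_inv_mult(2)[OF assms(1)] matrix_mul_assoc)
qed

lemma psd_if_symmetric_idempotent:
  assumes "transpose A = A" "A ** A = A"
  shows "psd A"
  unfolding psd_def
proof
  fix x
  have "x \<bullet> (A *v x) = x \<bullet> (A *v (A *v x))" using mv_idem[OF assms(2)] by simp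
  also have "\<dots> = (A *v x) \<bullet> (A *v x)" using inner_symmetric_mv[OF assms(1), of x "A *v x"] by simp
  finally show "0 \<le> x \<bullet> (A *v x)" by simp
qed

lemma symmetric_idempotent_compl:
  fixes A :: "real^'n^'n"
  assumes "transpose A = A" "A ** A = A"
  shows "transpose (mat 1 - A) = mat 1 - A" "(mat 1 - A) ** (mat 1 - A) = mat 1 - A"
proof -
  show "transpose (mat 1 - A) = mat 1 - A" using assms(1) by (simp add: transpose_diff)
  show "(mat 1 - A) ** (mat 1 - A) = mat 1 - A"
    using mv_idem[OF assms(2)]
    by (intro matrix_eq_by_mv) (simp add: matrix_vector_mult_diff_rdistrib matrix_vector_mult_diff_distrib)
qed

lemma symmetric_idempotent_eqI:
  fixes A B :: "real^'n^'n"
  assumes "transpose A = A" "A ** A = A" "transpose B = B" "B ** B = B"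
    and same_fixpoints: "\<And>x. A *v x = x \<longleftrightarrow> B *v x = x"
  shows "A = B"
proof -
  have "B ** A = A" "A ** B = B"
    using same_fixpoints mv_idem[OF assms(2)] mv_idem[OF assms(4)] by (auto intro!: matrix_eq_by_mv)
  then have "A = transpose (B ** A)" using assms(1) by simp
  also have "\<dots> = A ** B" using assms(1,3) by (simp add: matrix_transpose_mul)
  finally show ?thesis using \<open>A ** B = B\<close> by simp
qed

lemma symmetric_mult_if_invariant:
  fixes Q T :: "real^'n^'n"
  assumes "transpose Q = Q" "Q ** Q = Q" "transpose T = T"
    and invariant: "\<And>z. Q *v z = z \<Longrightarrow> Q *v (T *v z) = T *v z"
  shows "transpose (T ** Q) = T ** Q"
proof -
  have "Q ** (T ** Q) = T ** Q"
    using invariant mv_idem[OF assms(2)] by (intro matrix_eq_by_mv) (simp add: matrix_vector_mul_assoc[symmetric])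
  then have "transpose (T ** Q) = transpose (Q ** (T ** Q))" by simp
  also have "\<dots> = Q ** (T ** Q)" using assms(1,3) by (simp add: matrix_transpose_mul matrix_mul_assoc)
  finally show ?thesis using \<open>Q ** (T ** Q) = T ** Q\<close> by simp
qed

lemma idempotent_mult_if_symmetric:
  fixes Q T :: "real^'n^'n"
  assumes "transpose Q = Q" "Q ** Q = Q" "transpose T = T" "T ** T = T"
    and "transpose (T ** Q) = T ** Q"
  shows "(T ** Q) ** (T ** Q) = T ** Q"
proof -
  have "Q ** T = T ** Q" using assms(1,3,5) by (simp add: matrix_transpose_mul)
  have "(T ** Q) ** (T ** Q) = T ** (Q ** T) ** Q" by (simp add: matrix_mul_assoc)
  also have "\<dots> = (T ** T) ** (Q ** Q)" using \<open>Q ** T = T ** Q\<close> by (simp add: matrix_mul_assoc)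
  finally show ?thesis using assms(2,4) by simp
qed

definition diagm :: "('n \<Rightarrow> real) \<Rightarrow> real^'n^'n" where
  "diagm q = (\<chi> i j. if i = j then q i else 0)"

lemma diagm_mv: "diagm q *v x = (\<chi> i. q i * x $ i)"
proof -
  have "(\<Sum>j\<in>UNIV. (if i = j then q i else 0) * x $ j) = (\<Sum>j\<in>UNIV. if i = j then q i * x $ j else 0)" for i
    by (intro sum.cong) auto
  then show ?thesis by (simp add: vec_eq_iff matrix_vector_mult_def diagm_def)
qed

lemma transpose_diagm: "transpose (diagm q) = diagm q"
  by (auto simp: diagm_def transpose_def vec_eq_iff)

lemma diagm_idempotent: "(\<And>i. q i \<in> {0, 1}) \<Longrightarrow> diagm q ** diagm q = diagm q"
  by (intro matrix_eq_by_mv) (auto simp: diagm_mv vec_eq_iff)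

section \<open>The projectors onto the kernel of \<open>B\<^sub>K\<close>\<close>

lemma BK_mv: "BK K *v x = (\<chi> i. if i \<in> K then Brow i \<bullet> x else 0)"
  by (simp add: vec_eq_iff matrix_vector_mul_component BK_def)

lemma BK_mv_eq_0_iff: "K \<subseteq> brows \<Longrightarrow> BK K *v x = 0 \<longleftrightarrow> (\<forall>k\<in>K. x $ k = x $ nxt k)"
  by (auto simp: BK_mv vec_eq_iff Brow_inner subset_iff)

lemma BKT_mv: "transpose (BK K) *v m = (\<Sum>i\<in>K. m$i *\<^sub>R Brow i)"
proof -
  have "(transpose (BK K) *v m) $ j = (\<Sum>i\<in>UNIV. if i \<in> K then m$i * Brow i $ j else 0)" for j
    unfolding transpose_matrix_vector vector_matrix_mult_def
    by (simp add: mult.commute) (intro sum.cong, auto simp: BK_def)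
  then show ?thesis by (simp add: vec_eq_iff sum_component sum.If_cases)
qed

lemma BKT_mv_eq_Bt:
  assumes "K \<subseteq> brows"
  shows "transpose (BK K) *v m = Bt (\<lambda>i. if i \<in> K then m$i else 0)"
proof -
  have "Bt (\<lambda>i. if i \<in> K then m$i else 0) = (\<Sum>i\<in>brows. if i \<in> K then m$i *\<^sub>R Brow i else 0)"
    unfolding Bt_def by (intro sum.cong) auto
  also have "\<dots> = (\<Sum>i\<in>brows \<inter> K. m$i *\<^sub>R Brow i)"
    by (simp add: sum.If_cases)
  also have "brows \<inter> K = K" using assms by auto
  finally show ?thesis by (simp add: BKT_mv)
qed

definition gram :: "'n::{finite,wellorder} set \<Rightarrow> real^'n::{finite,wellorder}^'n::{finite,wellorder}" where
  "gram K = BK K ** transpose (BK K) + diagm (\<lambda>i. if i \<in> K then 0 else 1)"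

lemma projK_eq: "projK K = mat 1 - transpose (BK K) ** matrix_inv (gram K) ** BK K"
proof -
  have "(\<chi> i j. if i = j \<and> i \<notin> K then 1 else 0) = diagm (\<lambda>i. if i \<in> K then 0 else (1::real))"
    by (simp add: diagm_def vec_eq_iff)
  then show ?thesis by (simp add: projK_def gram_def)
qed

lemma projK_mv: "projK K *v x = x - transpose (BK K) *v (matrix_inv (gram K) *v (BK K *v x))"
  by (simp add: projK_eq matrix_vector_mult_diff_rdistrib matrix_vector_mul_assoc matrix_mul_assoc)

lemma gram_mv: "gram K *v m = BK K *v (transpose (BK K) *v m) + (\<chi> i. if i \<in> K then 0 else m$i)"
  by (auto simp: gram_def matrix_vector_mult_add_rdistrib matrix_vector_mul_assoc[symmetric] diagm_mv
      vec_eq_iff)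

lemma gram_mv_outside: "i \<notin> K \<Longrightarrow> (gram K *v m) $ i = m $ i"
  by (simp add: gram_mv BK_mv)

lemma gram_invertible:
  assumes K: "K \<subseteq> brows"
  shows "invertible (gram K)"
proof -
  have "m = 0" if m: "gram K *v m = 0" for m
  proof -
    have out: "m$i = 0" if "i \<notin> K" for i
      using gram_mv_outside[OF that, of m] m by simp
    then have "(\<chi> i. if i \<in> K then 0 else m$i) = 0" by (simp add: vec_eq_iff)
    then have "BK K *v (transpose (BK K) *v m) = 0"
      using m by (simp add: gram_mv)
    then have "(transpose (BK K) *v m) \<bullet> (transpose (BK K) *v m) = 0"
      using inner_transpose_mv[of "BK K" m "transpose (BK K) *v m"] by simp
    then have "Bt (\<lambda>i. if i \<in> K then m$i else 0) = 0"
      by (simp add: BKT_mv_eq_Bt[OF K])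
    then have "m$i = 0" if "i \<in> K" for i
      using that K unfolding Bt_eq_0_iff by (metis subsetD)
    with out show ?thesis by (auto simp: vec_eq_iff)
  qed
  then show ?thesis
    using matrix_left_invertible_ker[of "gram K"] invertible_left_inverse[of "gram K"] by blast
qed

lemma gram_symmetric: "transpose (gram K) = gram K"
  by (simp add: gram_def transpose_add matrix_transpose_mul transpose_diagm)

lemma gram_inv_mv:
  assumes "K \<subseteq> brows"
  shows "gram K *v (matrix_inv (gram K) *v r) = r" "matrix_inv (gram K) *v (gram K *v r) = r"
  using matrix_inv_mult[OF gram_invertible[OF assms]]
  by (simp_all add: matrix_vector_mul_assoc)

lemma BK_projK:
  assumes K: "K \<subseteq> brows"
  shows "BK K *v (projK K *v x) = 0"
proof -
  define m where "m = matrix_inv (gram K) *v (BK K *v x)"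
  have gm: "gram K *v m = BK K *v x"
    by (simp add: m_def gram_inv_mv[OF K])
  have "m$i = 0" if "i \<notin> K" for i
    using gram_mv_outside[OF that, of m] gm that by (simp add: BK_mv)
  then have "(\<chi> i. if i \<in> K then 0 else m$i) = 0" by (simp add: vec_eq_iff)
  then have "BK K *v (transpose (BK K) *v m) = BK K *v x"
    using gm by (simp add: gram_mv)
  then show ?thesis by (simp add: projK_mv matrix_vector_mult_diff_distrib m_def)
qed

lemma projK_fixI: "BK K *v x = 0 \<Longrightarrow> projK K *v x = x"
  by (simp add: projK_mv)

lemma projK_BKT:
  assumes K: "K \<subseteq> brows"
  shows "projK K *v (transpose (BK K) *v m) = 0"
proof -
  define m' where "m' = (\<chi> i. if i \<in> K then m$i else 0)"
  have BKT: "transpose (BK K) *v m' = transpose (BK K) *v m"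
    by (simp add: m'_def BKT_mv)
  moreover have "(\<chi> i. if i \<in> K then 0 else m'$i) = 0" by (simp add: m'_def vec_eq_iff)
  ultimately have "BK K *v (transpose (BK K) *v m) = gram K *v m'"
    by (simp add: gram_mv)
  then show ?thesis by (simp add: projK_mv BKT gram_inv_mv[OF K])
qed

lemma projK_idempotent: "K \<subseteq> brows \<Longrightarrow> projK K ** projK K = projK K"
  by (intro matrix_eq_by_mv) (simp add: projK_fixI BK_projK)

lemma projK_symmetric:
  assumes K: "K \<subseteq> brows"
  shows "transpose (projK K) = projK K"
proof (rule symmetric_if_inner)
  fix x z
  let ?G = "matrix_inv (gram K)"
  have G: "transpose ?G = ?G"
    by (rule transpose_matrix_inv[OF gram_invertible[OF K] gram_symmetric])
  have "(transpose (BK K) *v (?G *v (BK K *v x))) \<bullet> z = (?G *v (BK K *v x)) \<bullet> (BK K *v z)"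
    by (rule inner_transpose_mv)
  also have "\<dots> = (BK K *v x) \<bullet> (?G *v (BK K *v z))"
    by (rule inner_symmetric_mv[OF G])
  also have "\<dots> = x \<bullet> (transpose (BK K) *v (?G *v (BK K *v z)))"
    using inner_transpose_mv[of "BK K" "?G *v (BK K *v z)" x] by (simp add: inner_commute)
  finally show "(projK K *v x) \<bullet> z = x \<bullet> (projK K *v z)"
    by (simp add: projK_mv inner_diff_left inner_diff_right)
qed

lemma projK_fixed_iff: "K \<subseteq> brows \<Longrightarrow> projK K *v x = x \<longleftrightarrow> (\<forall>k\<in>K. x $ k = x $ nxt k)"
  using BK_projK[of K x] projK_fixI[of K x] by (metis BK_mv_eq_0_iff)

lemma independent_Brow:
  assumes K: "K \<subseteq> (brows :: 'n::{finite,wellorder} set)"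
  shows "independent (Brow ` K)" and "inj_on Brow K"
proof -
  have Bt_Brow: "Bt (\<lambda>i. if i \<in> K then c i else 0) = (\<Sum>i\<in>K. c i *\<^sub>R Brow i)" for c
    using BKT_mv_eq_Bt[OF K, of "\<chi> i. c i"] unfolding vec_lambda_beta by (simp add: BKT_mv)
  show inj: "inj_on Brow K"
  proof (rule inj_onI)
    fix i j assume "i \<in> K" "j \<in> K" "Brow i = Brow j"
    then show "i = j" using K less_nxt[of i] by (auto simp: Brow_def vec_eq_iff split: if_splits)
  qed
  show "independent (Brow ` K)"
  proof
    assume "dependent (Brow ` K)"
    then obtain u where u: "\<exists>v\<in>Brow ` K. u v \<noteq> 0" "(\<Sum>v\<in>Brow ` K. u v *\<^sub>R v) = 0"
      using real_vector.dependent_finite[of "Brow ` K"] by auto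
    have "Bt (\<lambda>i. if i \<in> K then u (Brow i) else 0) = 0"
      using u(2) sum.reindex[OF inj, of "\<lambda>v. u v *\<^sub>R v"] by (simp add: Bt_Brow)
    then have "u (Brow i) = 0" if "i \<in> K" for i
      using that K unfolding Bt_eq_0_iff by (metis subsetD)
    then show False using u(1) by auto
  qed
qed

lemma rank_BK:
  assumes K: "K \<subseteq> (brows :: 'n::{finite,wellorder} set)"
  shows "rank (BK K) = card K"
proof -
  have "rows (BK K) \<subseteq> insert 0 (Brow ` K)"
    by (auto simp: rows_def row_def BK_def)
  moreover have "Brow ` K \<subseteq> rows (BK K)"
    unfolding rows_def row_def BK_def by (auto simp: vec_lambda_eta)
  ultimately have "span (rows (BK K)) = span (Brow ` K)"
    by (metis real_vector.span_insert_0 real_vector.span_mono subset_antisym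
        real_vector.span_eq)
  then have "dim (rows (BK K)) = dim (Brow ` K)"
    by (metis real_vector.dim_span)
  also have "\<dots> = card K"
    using real_vector.dim_eq_card_independent[OF independent_Brow(1)[OF K]]
      card_image[OF independent_Brow(2)[OF K]] by simp
  finally show ?thesis by (simp add: row_rank_def)
qed

lemma KD_iff: "K \<in> KD v \<longleftrightarrow> {i. multD v $ i \<noteq> 0} \<subseteq> K \<and> K \<subseteq> ID v"
  unfolding KD_def MD_eq using rank_BK by (auto simp: ID_def)

lemma KD_subset_brows: "K \<in> KD v \<Longrightarrow> K \<subseteq> brows"
  by (auto simp: KD_iff ID_def)

lemma support_multD_in_KD: "{i. multD v $ i \<noteq> 0} \<in> KD v"
  using multD_nonzero_in_ID by (auto simp: KD_iff)

lemma projK_eq_projD: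
  assumes "K \<in> KD v"
  shows "projK K *v v = projD v"
proof -
  have K: "K \<subseteq> brows" by (rule KD_subset_brows[OF assms])
  have "(\<lambda>i. if i \<in> K then multD v $ i else 0) = ($) (multD v)"
    using assms by (auto simp: KD_iff fun_eq_iff)
  then have "transpose (BK K) *v multD v = v - projD v"
    by (simp add: BKT_mv_eq_Bt[OF K] Bt_multD)
  moreover have "BK K *v projD v = 0"
    using assms by (auto simp: KD_iff BK_mv ID_def vec_eq_iff)
  ultimately have "projK K *v v = projK K *v projD v + projK K *v (transpose (BK K) *v multD v)"
    by (simp add: matrix_vector_right_distrib[symmetric])
  then show ?thesis using projK_fixI[OF \<open>BK K *v projD v = 0\<close>] projK_BKT[OF K] by simp
qed

section \<open>Sorting\<close>

lemma permmat_mv: "permmat \<tau> *v x = (\<chi> i. x $ \<tau> i)"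
proof -
  have "(\<Sum>j\<in>UNIV. (if \<tau> i = j then 1 else 0) * x$j) = (\<Sum>j\<in>UNIV. if \<tau> i = j then x$j else 0)" for i
    by (intro sum.cong) auto
  then show ?thesis by (simp add: vec_eq_iff matrix_vector_mult_def permmat_def)
qed

lemma transpose_permmat_mv:
  assumes "\<tau> permutes UNIV"
  shows "transpose (permmat \<tau>) *v x = (\<chi> i. x $ inv \<tau> i)"
proof -
  have "(\<Sum>j\<in>UNIV. (if \<tau> j = i then 1 else 0) * x$j) = (\<Sum>j\<in>UNIV. if inv \<tau> i = j then x$j else 0)" for i
    by (intro sum.cong) (auto simp: permutes_inv_eq[OF assms])
  then show ?thesis by (simp add: vec_eq_iff transpose_def matrix_vector_mult_def permmat_def)
qed

lemma transpose_permmat_cancel: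
  assumes "\<tau> permutes UNIV"
  shows "transpose (permmat \<tau>) *v (permmat \<tau> *v x) = x"
    and "permmat \<tau> *v (transpose (permmat \<tau>) *v x) = x"
  by (simp_all add: permmat_mv transpose_permmat_mv[OF assms] permutes_inverses[OF assms])

lemma sum_permutes_UNIV: "\<tau> permutes UNIV \<Longrightarrow> (\<Sum>i\<in>UNIV. f (\<tau> i)) = (\<Sum>i\<in>UNIV. f i)"
  using sum.reindex_bij_betw[OF permutes_imp_bij, of \<tau> UNIV f] by simp

lemma inner_permmat: "\<tau> permutes UNIV \<Longrightarrow> (permmat \<tau> *v x) \<bullet> (permmat \<tau> *v z) = x \<bullet> (z::real^_)"
  unfolding permmat_mv inner_vec_def using sum_permutes_UNIV[of \<tau> "\<lambda>i. x$i * z$i"] by simp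

lemma norm_permmat: "\<tau> permutes UNIV \<Longrightarrow> norm (permmat \<tau> *v x) = norm (x::real^_)"
  using inner_permmat[of \<tau> x x] by (simp add: norm_eq_sqrt_inner)

lemma norm_transpose_permmat: "\<tau> permutes UNIV \<Longrightarrow> norm (transpose (permmat \<tau>) *v x) = norm (x::real^_)"
  using norm_permmat[of \<tau> "transpose (permmat \<tau>) *v x"] transpose_permmat_cancel(2)[of \<tau> x] by simp

lemma l1norm_permmat: "\<tau> permutes UNIV \<Longrightarrow> l1norm (permmat \<tau> *v x) = l1norm x"
  unfolding l1norm_def permmat_mv using sum_permutes_UNIV[of \<tau> "\<lambda>i. \<bar>x$i\<bar>"] by simp

lemma pairpen_symmetric: "pairpen x = (1/2) * (\<Sum>i\<in>UNIV. \<Sum>j\<in>UNIV. \<bar>x$i - x$j\<bar>)"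
proof -
  let ?half = "\<lambda>x. \<Sum>i\<in>UNIV. \<Sum>j\<in>UNIV. if i < j then \<bar>x$i - x$j\<bar> else 0"
  have "(\<Sum>i\<in>UNIV. \<Sum>j\<in>UNIV. \<bar>x$i - x$j\<bar>)
      = ?half x + (\<Sum>i\<in>UNIV. \<Sum>j\<in>UNIV. if j < i then \<bar>x$i - x$j\<bar> else 0)"
    by (simp add: sum.distrib[symmetric], intro sum.cong) (auto simp: not_less_iff_gr_or_eq)
  also have "(\<Sum>i\<in>UNIV. \<Sum>j\<in>UNIV. if j < i then \<bar>x$i - x$j\<bar> else 0) = ?half x"
    by (subst sum.swap) (intro sum.cong refl, simp add: abs_minus_commute)
  finally show ?thesis unfolding pairpen_def by (simp add: sum.If_cases)
qed

lemma pairpen_permmat: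
  assumes "\<tau> permutes UNIV"
  shows "pairpen (permmat \<tau> *v x) = pairpen x"
proof -
  have "(\<Sum>i\<in>UNIV. \<Sum>j\<in>UNIV. \<bar>x$\<tau> i - x$\<tau> j\<bar>) = (\<Sum>i\<in>UNIV. \<Sum>j\<in>UNIV. \<bar>x$i - x$\<tau> j\<bar>)"
    using sum_permutes_UNIV[OF assms, of "\<lambda>i. \<Sum>j\<in>UNIV. \<bar>x$i - x$\<tau> j\<bar>"] by simp
  also have "\<dots> = (\<Sum>i\<in>UNIV. \<Sum>j\<in>UNIV. \<bar>x$i - x$j\<bar>)"
    by (intro sum.cong refl sum_permutes_UNIV[OF assms])
  finally show ?thesis by (simp add: pairpen_symmetric permmat_mv)
qed

lemma card_greater: "real (card {j. (i::'n::{finite,wellorder}) < j}) = CARD('n) - 1 - real (card {j. j < i})"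
proof -
  have "UNIV = {j. j < i} \<union> ({i} \<union> {j. i < j})" by auto
  then have "CARD('n) = card ({j. j < i} \<union> ({i} \<union> {j. i < j}))" by simp
  also have "\<dots> = card {j. j < i} + (1 + card {j. i < j})"
    by (subst card_Un_disjoint; auto simp: card_Un_disjoint)
  finally show ?thesis by simp
qed

lemma pairpen_Dset:
  assumes "x \<in> Dset"
  shows "pairpen x = wvec \<bullet> x"
proof -
  have "pairpen x = (\<Sum>i\<in>UNIV. \<Sum>j\<in>{j. i < j}. x$i - x$j)"
    unfolding pairpen_def using assms by (intro sum.cong) (auto simp: Dset_iff)
  also have "\<dots> = (\<Sum>i\<in>UNIV. real (card {j. i < j}) * x$i) - (\<Sum>i\<in>UNIV. \<Sum>j\<in>{j. i < j}. x$j)"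
    by (simp add: sum_subtractf)
  also have "(\<Sum>i\<in>UNIV. \<Sum>j\<in>{j. i < j}. x$j) = (\<Sum>j\<in>UNIV. \<Sum>i\<in>{i. i < j}. x$j)"
    using sum.swap_restrict[of UNIV UNIV "\<lambda>i j. x$j" "\<lambda>i j. i < j"] by simp
  also have "\<dots> = (\<Sum>j\<in>UNIV. real (card {i. i < j}) * x$j)" by simp
  finally have "pairpen x = (\<Sum>i\<in>UNIV. (real (card {j. i < j}) - real (card {j. j < i})) * x$i)"
    by (simp add: sum_subtractf left_diff_distrib)
  also have "\<dots> = wvec \<bullet> x"
    unfolding inner_vec_def wvec_def by (intro sum.cong) (auto simp: card_greater)
  finally show ?thesis .
qed

lemma wvec_step: "k \<in> brows \<Longrightarrow> wvec $ k - wvec $ nxt k = 2"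
proof -
  assume k: "k \<in> brows"
  have "j < nxt k \<longleftrightarrow> j = k \<or> j < k" for j
    using less_nxt_iff[OF k, of j] by (metis order_le_less)
  then have "{j. j < nxt k} = insert k {j. j < k}" by auto
  then show ?thesis by (simp add: wvec_def)
qed

lemma rearrangement_inequality:
  fixes a t :: "'a::linorder \<Rightarrow> real"
  assumes "finite I" "\<pi> permutes I"
    and "\<forall>i\<in>I. \<forall>j\<in>I. i \<le> j \<longrightarrow> a j \<le> a i"
    and "\<forall>i\<in>I. \<forall>j\<in>I. i \<le> j \<longrightarrow> t j \<le> t i"
  shows "(\<Sum>i\<in>I. t (\<pi> i) * a i) \<le> (\<Sum>i\<in>I. t i * a i)"
  using assms
proof (induction "card I" arbitrary: I \<pi>)
  case 0
  then show ?case by simp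
next
  case (Suc k)
  define m where "m = Max I"
  have "I \<noteq> {}" using Suc.hyps(2) by auto
  then have mI: "m \<in> I" and m_max: "\<And>i. i \<in> I \<Longrightarrow> i \<le> m"
    using Suc.prems(1) by (auto simp: m_def)
  have "m \<in> \<pi> ` I" using permutes_image[OF Suc.prems(2)] mI by simp
  then obtain j where jI: "j \<in> I" and pj: "\<pi> j = m" by auto
  define \<pi>' where "\<pi>' = \<pi> \<circ> Transposition.transpose j m"
  have \<pi>': "\<pi>' permutes I"
    unfolding \<pi>'_def by (intro permutes_compose permutes_swap_id jI mI Suc.prems(2))
  have \<pi>'m: "\<pi>' m = m" by (simp add: \<pi>'_def pj)
  txt \<open>Composing with a swap so that the maximum \<open>m\<close> becomes a fixed point does not
    decrease the sum; then the induction hypothesis applies on \<open>I - {m}\<close>.\<close>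
  have swap: "(\<Sum>i\<in>I. t (\<pi> i) * a i) \<le> (\<Sum>i\<in>I. t (\<pi>' i) * a i)"
  proof (cases "j = m")
    case False
    have \<pi>m: "\<pi> m \<in> I" using Suc.prems(2) mI by (simp add: permutes_in_image)
    have rest: "(\<Sum>i\<in>I - {j, m}. t (\<pi> i) * a i) = (\<Sum>i\<in>I - {j, m}. t (\<pi>' i) * a i)"
      by (intro sum.cong) (auto simp: \<pi>'_def transpose_apply_other)
    have split: "(\<Sum>i\<in>I. f i) = f j + f m + (\<Sum>i\<in>I - {j, m}. f i)" for f :: "'a \<Rightarrow> real"
      using Suc.prems(1) jI mI False
      by (simp add: sum.remove[of I j] sum.remove[of "I - {j}" m] Diff_insert2[symmetric])
    have "0 \<le> (t (\<pi> m) - t m) * (a j - a m)"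
      using Suc.prems(3,4) \<pi>m jI mI m_max[OF \<pi>m] m_max[OF jI] by simp
    then show ?thesis
      using split[of "\<lambda>i. t (\<pi> i) * a i"] split[of "\<lambda>i. t (\<pi>' i) * a i"] rest pj \<pi>'m False
      by (simp add: \<pi>'_def algebra_simps)
  qed (simp add: \<pi>'_def)
  have "\<pi>' permutes (I - {m})"
    using \<pi>' \<pi>'m by (auto simp: permutes_def)
  then have "(\<Sum>i\<in>I - {m}. t (\<pi>' i) * a i) \<le> (\<Sum>i\<in>I - {m}. t i * a i)"
    using Suc mI by (intro Suc.hyps(1)) auto
  then have "(\<Sum>i\<in>I. t (\<pi>' i) * a i) \<le> (\<Sum>i\<in>I. t i * a i)"
    using Suc.prems(1) mI \<pi>'m by (simp add: sum.remove)
  with swap show ?case by simp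
qed

lemma inner_permmat_le:
  assumes "a \<in> Dset" "t \<in> Dset" "\<tau> permutes UNIV"
  shows "(permmat \<tau> *v t) \<bullet> a \<le> t \<bullet> a"
  using rearrangement_inequality[of UNIV \<tau> "\<lambda>i. a$i" "\<lambda>i. t$i"] assms
  unfolding inner_vec_def permmat_mv Dset_iff by simp

lemma permmat_Dset_eq:
  assumes "s \<in> Dset" "permmat \<tau> *v s \<in> Dset" "\<tau> permutes UNIV"
  shows "permmat \<tau> *v s = s"
proof -
  let ?t = "permmat \<tau> *v s"
  have "?t \<bullet> ?t \<le> s \<bullet> ?t" using inner_permmat_le[OF assms(2,1,3)] .
  moreover have "?t \<bullet> ?t = s \<bullet> s" by (rule inner_permmat[OF assms(3)])
  ultimately have "(s - ?t) \<bullet> (s - ?t) \<le> 0" by (simp add: inner_diff inner_commute)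
  then have "(s - ?t) \<bullet> (s - ?t) = 0" using inner_ge_zero[of "s - ?t"] by linarith
  then show ?thesis by simp
qed

lemma norm_sorted_diff_le:
  assumes \<tau>z: "\<tau>z permutes UNIV" "permmat \<tau>z *v z \<in> Dset"
    and \<tau>y: "\<tau>y permutes UNIV" "permmat \<tau>y *v y \<in> Dset"
  shows "norm (permmat \<tau>z *v z - permmat \<tau>y *v y) \<le> norm (z - y)"
proof -
  define t where "t = permmat \<tau>z *v z"
  define a where "a = permmat \<tau>y *v y"
  define z' where "z' = permmat \<tau>y *v z"
  have "z' = permmat (inv \<tau>z \<circ> \<tau>y) *v t"
    by (simp add: vec_eq_iff permmat_mv t_def z'_def permutes_inverses[OF \<tau>z(1)])
  then have "z' \<bullet> a \<le> t \<bullet> a"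
    using inner_permmat_le \<tau>y(2) \<tau>z(2) permutes_compose[OF \<tau>y(1) permutes_inv[OF \<tau>z(1)]]
    by (simp add: a_def t_def)
  moreover have "z' \<bullet> z' = t \<bullet> t"
    by (simp add: z'_def t_def inner_permmat \<tau>z(1) \<tau>y(1))
  ultimately have "(t - a) \<bullet> (t - a) \<le> (z' - a) \<bullet> (z' - a)"
    by (simp add: inner_diff_left inner_diff_right inner_commute)
  moreover have "z' - a = permmat \<tau>y *v (z - y)"
    by (simp add: z'_def a_def matrix_vector_mult_diff_distrib)
  ultimately show ?thesis
    by (simp add: norm_eq_sqrt_inner t_def a_def inner_permmat[OF \<tau>y(1)])
qed

section \<open>The proximal maps\<close>

text \<open>Strict convexity of the proximal objective makes any minimizer the value of the
  Hilbert-choice in \<open>prox\<close>.\<close>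

lemma prox_eqI:
  fixes f :: "real^'n::{finite,wellorder} \<Rightarrow> real"
  assumes convex: "\<And>a b. f ((1/2) *\<^sub>R (a + b)) \<le> (f a + f b) / 2"
    and min: "\<And>z. (1/2) * (norm (x - y))\<^sup>2 + f x \<le> (1/2) * (norm (z - y))\<^sup>2 + f z"
  shows "prox f y = x"
proof -
  define obj where "obj z = (1/2) * (norm (z - y))\<^sup>2 + f z" for z
  define p where "p = prox f y"
  have "\<forall>z. obj p \<le> obj z"
    unfolding p_def prox_def obj_def by (rule someI[of _ x]) (use min in auto)
  then have p_le: "obj p \<le> obj x" by auto
  have "(1/2) *\<^sub>R (x + p) - y = (1/2) *\<^sub>R ((x - y) + (p - y))"
    by (simp add: vec_eq_iff field_simps)
  then have "(norm ((1/2) *\<^sub>R (x + p) - y))\<^sup>2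
      = (norm (x - y))\<^sup>2 / 2 + (norm (p - y))\<^sup>2 / 2 - (norm (x - p))\<^sup>2 / 4"
    unfolding power2_norm_eq_inner
    by (simp add: inner_add_left inner_add_right inner_diff_left inner_diff_right inner_commute
        field_simps)
  then have "obj ((1/2) *\<^sub>R (x + p)) \<le> (obj x + obj p) / 2 - (norm (x - p))\<^sup>2 / 8"
    using convex[of x p] unfolding obj_def by (simp add: field_simps)
  with min have "obj x \<le> (obj x + obj p) / 2 - (norm (x - p))\<^sup>2 / 8"
    unfolding obj_def by (meson order_trans)
  then have "obj x * 8 + 2 * (norm (x - p))\<^sup>2 \<le> obj p * 8" by (simp add: field_simps)
  then have "(norm (x - p))\<^sup>2 \<le> 0" using p_le by linarith
  then show ?thesis by (simp add: p_def)
qed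

lemma l1norm_midpoint_convex: "l1norm ((1/2) *\<^sub>R (a + b)) \<le> (l1norm a + l1norm b) / 2"
proof -
  have "l1norm ((1/2) *\<^sub>R (a + b)) \<le> (\<Sum>i\<in>UNIV. (\<bar>a$i\<bar> + \<bar>b$i\<bar>) / 2)"
    unfolding l1norm_def by (intro sum_mono) (simp add: abs_triangle_ineq)
  also have "\<dots> = (l1norm a + l1norm b) / 2"
    unfolding l1norm_def by (simp add: sum_divide_distrib[symmetric] sum.distrib)
  finally show ?thesis .
qed

lemma pairpen_midpoint_convex: "pairpen ((1/2) *\<^sub>R (a + b)) \<le> (pairpen a + pairpen b) / 2"
proof -
  have "\<bar>((1/2) *\<^sub>R (a + b))$i - ((1/2) *\<^sub>R (a + b))$j\<bar> \<le> (\<bar>a$i - a$j\<bar> + \<bar>b$i - b$j\<bar>) / 2" for i j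
  proof -
    have "((1/2) *\<^sub>R (a + b))$i - ((1/2) *\<^sub>R (a + b))$j = ((a$i - a$j) + (b$i - b$j)) / 2"
      by (simp add: field_simps)
    then have "\<bar>((1/2) *\<^sub>R (a + b))$i - ((1/2) *\<^sub>R (a + b))$j\<bar> = \<bar>(a$i - a$j) + (b$i - b$j)\<bar> / 2"
      by (simp only: abs_divide)
    then show ?thesis using abs_triangle_ineq[of "a$i - a$j" "b$i - b$j"] by simp
  qed
  then have "pairpen ((1/2) *\<^sub>R (a + b)) \<le> (\<Sum>i\<in>UNIV. \<Sum>j\<in>{j. i < j}. (\<bar>a$i - a$j\<bar> + \<bar>b$i - b$j\<bar>) / 2)"
    unfolding pairpen_def by (intro sum_mono)
  also have "\<dots> = (pairpen a + pairpen b) / 2"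
    unfolding pairpen_def by (simp add: sum_divide_distrib[symmetric] sum.distrib)
  finally show ?thesis .
qed

lemma penp_midpoint_convex:
  assumes "\<beta> \<ge> 0" "\<rho> \<ge> 0"
  shows "penp \<beta> \<rho> ((1/2) *\<^sub>R (a + b)) \<le> (penp \<beta> \<rho> a + penp \<beta> \<rho> b) / 2"
  using mult_left_mono[OF pairpen_midpoint_convex assms(2), of a b]
    mult_left_mono[OF l1norm_midpoint_convex assms(1), of a b]
  unfolding penp_def by (simp add: algebra_simps)

definition softf :: "real \<Rightarrow> real \<Rightarrow> real" where
  "softf \<beta> c = (if c > \<beta> then c - \<beta> else if c < -\<beta> then c + \<beta> else 0)"

definition soft :: "real \<Rightarrow> real^'n::{finite,wellorder} \<Rightarrow> real^'n::{finite,wellorder}" where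
  "soft \<beta> c = (\<chi> i. softf \<beta> (c$i))"

lemma soft_zero: "soft 0 x = x"
  by (simp add: soft_def softf_def vec_eq_iff)

lemma soft_Dset: "\<beta> \<ge> 0 \<Longrightarrow> x \<in> Dset \<Longrightarrow> soft \<beta> x \<in> Dset"
  unfolding soft_def softf_def Dset_iff by force

lemma diff_soft_Dset: "\<beta> \<ge> 0 \<Longrightarrow> x \<in> Dset \<Longrightarrow> x - soft \<beta> x \<in> Dset"
  unfolding soft_def softf_def Dset_iff by force

lemma transpose_permmat_soft:
  "\<tau> permutes UNIV \<Longrightarrow> transpose (permmat \<tau>) *v soft \<beta> x = soft \<beta> (transpose (permmat \<tau>) *v x)"
  by (simp add: transpose_permmat_mv soft_def)

lemma inner_diff_soft_le:
  assumes "\<beta> \<ge> 0"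
  shows "(x - soft \<beta> x) \<bullet> t \<le> \<beta> * l1norm t"
proof -
  have "(x$i - softf \<beta> (x$i)) * t$i \<le> \<beta> * \<bar>t$i\<bar>" for i
  proof -
    have "(x$i - softf \<beta> (x$i)) * t$i \<le> \<bar>x$i - softf \<beta> (x$i)\<bar> * \<bar>t$i\<bar>"
      by (metis abs_ge_self abs_mult)
    also have "\<dots> \<le> \<beta> * \<bar>t$i\<bar>"
      using assms by (intro mult_right_mono) (auto simp: softf_def)
    finally show ?thesis .
  qed
  then have "(x - soft \<beta> x) \<bullet> t \<le> (\<Sum>i\<in>UNIV. \<beta> * \<bar>t$i\<bar>)"
    unfolding inner_vec_def soft_def by (intro sum_mono) simp
  also have "\<dots> = \<beta> * l1norm t" by (simp add: l1norm_def sum_distrib_left)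
  finally show ?thesis .
qed

lemma inner_diff_soft_soft:
  assumes "\<beta> \<ge> 0"
  shows "(x - soft \<beta> x) \<bullet> soft \<beta> x = \<beta> * l1norm (soft \<beta> x)"
proof -
  have "(c - softf \<beta> c) * softf \<beta> c = \<beta> * \<bar>softf \<beta> c\<bar>" for c
    using assms unfolding softf_def by (auto simp: algebra_simps)
  then show ?thesis
    by (simp add: inner_vec_def soft_def l1norm_def sum_distrib_left)
qed

text \<open>Since \<open>projD v - soft \<beta> (projD v)\<close> lies again in \<open>Dset\<close>, the variational inequality
  of the projection also applies to it.\<close>

lemma soft_projD_minimal:
  assumes b: "\<beta> \<ge> 0" and tD: "t \<in> Dset"
  shows "(1/2) * (norm (soft \<beta> (projD v) - v))\<^sup>2 + \<beta> * l1norm (soft \<beta> (projD v))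
       \<le> (1/2) * (norm (t - v))\<^sup>2 + \<beta> * l1norm t"
proof -
  define P where "P = projD v"
  define r where "r = soft \<beta> P"
  define d where "d = P - r"
  have "d \<in> Dset" unfolding d_def r_def P_def by (rule diff_soft_Dset[OF b projD_in_Dset])
  have i1: "(P - v) \<bullet> (t - P) \<ge> 0"
    using projD_inner_le[OF tD, of v] unfolding P_def by (simp add: inner_diff_left inner_diff_right)
  have i2: "(P - v) \<bullet> d \<ge> 0"
    using residual_inner_le[OF \<open>d \<in> Dset\<close>, of v] unfolding P_def by (simp add: inner_diff_left)
  have i3: "d \<bullet> t \<le> \<beta> * l1norm t" unfolding d_def r_def by (rule inner_diff_soft_le[OF b])
  have i4: "d \<bullet> r = \<beta> * l1norm r" unfolding d_def r_def by (rule inner_diff_soft_soft[OF b])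
  have "(norm (t - v))\<^sup>2
      = (norm (r - v))\<^sup>2 + 2 * ((P - v) \<bullet> (t - P) + (P - v) \<bullet> d - d \<bullet> t + d \<bullet> r) + (norm (t - r))\<^sup>2"
    unfolding power2_norm_eq_inner d_def
    by (simp add: inner_diff_left inner_diff_right inner_commute algebra_simps)
  with i1 i2 i3 i4 have "(norm (r - v))\<^sup>2 + 2 * (\<beta> * l1norm r) \<le> (norm (t - v))\<^sup>2 + 2 * (\<beta> * l1norm t)"
    by (smt (verit) zero_le_power2)
  then show ?thesis unfolding r_def P_def by linarith
qed

lemma half_norm_shift:
  fixes q a w :: "'a::real_inner"
  shows "(1/2) * (norm (q - a))\<^sup>2 + \<rho> * (w \<bullet> q)
     = (1/2) * (norm (q - (a - \<rho> *\<^sub>R w)))\<^sup>2 + \<rho> * (w \<bullet> a) - (1/2) * \<rho>\<^sup>2 * (norm w)\<^sup>2"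
  unfolding power2_norm_eq_inner
  by (simp add: inner_add_left inner_add_right inner_diff_left inner_diff_right inner_commute
      algebra_simps power2_eq_square)

definition sorter :: "(real^'n::{finite,wellorder} \<Rightarrow> 'n \<Rightarrow> 'n) \<Rightarrow> bool" where
  "sorter \<sigma> \<longleftrightarrow> (\<forall>z. \<sigma> z permutes UNIV \<and> permmat (\<sigma> z) *v z \<in> Dset)"

lemma prox_penp_sorted:
  fixes y :: "real^'n::{finite,wellorder}" and \<sigma> :: "real^'n::{finite,wellorder} \<Rightarrow> 'n::{finite,wellorder} \<Rightarrow> 'n::{finite,wellorder}"
  assumes srt: "sorter \<sigma>" and \<tau>: "\<tau> permutes UNIV" "permmat \<tau> *v y \<in> Dset"
    and "\<rho> \<ge> 0" "\<beta> \<ge> 0"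
  shows "prox (penp \<beta> \<rho>) y = transpose (permmat \<tau>) *v soft \<beta> (projD (permmat \<tau> *v y - \<rho> *\<^sub>R wvec))"
proof (rule prox_eqI)
  show "penp \<beta> \<rho> ((1/2) *\<^sub>R (a + b)) \<le> (penp \<beta> \<rho> a + penp \<beta> \<rho> b) / 2" for a b
    by (rule penp_midpoint_convex) fact+
next
  fix z :: "real^'n::{finite,wellorder}"
  define a where "a = permmat \<tau> *v y"
  define v where "v = a - \<rho> *\<^sub>R wvec"
  define r where "r = soft \<beta> (projD v)"
  define s where "s = transpose (permmat \<tau>) *v r"
  define t where "t = permmat (\<sigma> z) *v z"
  have \<sigma>z: "\<sigma> z permutes UNIV" and "t \<in> Dset" using srt by (auto simp: sorter_def t_def)
  have "r \<in> Dset" unfolding r_def using \<open>\<beta> \<ge> 0\<close> by (rule soft_Dset[OF _ projD_in_Dset])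
  have Ps: "permmat \<tau> *v s = r" by (simp add: s_def transpose_permmat_cancel(2)[OF \<tau>(1)])
  have "norm (s - y) = norm (r - a)"
    using norm_permmat[OF \<tau>(1), of "s - y"] by (simp add: Ps a_def matrix_vector_mult_diff_distrib)
  then have "(norm (s - y))\<^sup>2 = (norm (r - a))\<^sup>2" by simp
  moreover have "penp \<beta> \<rho> s = \<rho> * (wvec \<bullet> r) + \<beta> * l1norm r"
    using pairpen_permmat[OF \<tau>(1), of s] l1norm_permmat[OF \<tau>(1), of s] pairpen_Dset[OF \<open>r \<in> Dset\<close>]
    by (simp add: penp_def Ps)
  moreover have "penp \<beta> \<rho> z = \<rho> * (wvec \<bullet> t) + \<beta> * l1norm t"
    using pairpen_permmat[OF \<sigma>z, of z] l1norm_permmat[OF \<sigma>z, of z] pairpen_Dset[OF \<open>t \<in> Dset\<close>]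
    by (simp add: penp_def t_def)
  moreover have "norm (t - a) \<le> norm (z - y)"
    unfolding t_def a_def using srt \<tau> by (intro norm_sorted_diff_le) (auto simp: sorter_def)
  then have "(norm (t - a))\<^sup>2 \<le> (norm (z - y))\<^sup>2" by (simp add: power_mono)
  moreover have "(1/2) * (norm (r - a))\<^sup>2 + \<rho> * (wvec \<bullet> r) + \<beta> * l1norm r
      \<le> (1/2) * (norm (t - a))\<^sup>2 + \<rho> * (wvec \<bullet> t) + \<beta> * l1norm t"
    using half_norm_shift[of r a \<rho> wvec] half_norm_shift[of t a \<rho> wvec]
      soft_projD_minimal[OF \<open>\<beta> \<ge> 0\<close> \<open>t \<in> Dset\<close>, of v]
    by (simp add: r_def v_def)
  ultimately show "(1/2) * (norm (s - y))\<^sup>2 + penp \<beta> \<rho> s \<le> (1/2) * (norm (z - y))\<^sup>2 + penp \<beta> \<rho> z"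
    by linarith
qed

lemma Sfun_sorted:
  fixes y :: "real^'n::{finite,wellorder}" and \<sigma> :: "real^'n::{finite,wellorder} \<Rightarrow> 'n::{finite,wellorder} \<Rightarrow> 'n::{finite,wellorder}"
  assumes "sorter \<sigma>" "\<tau> permutes UNIV" "permmat \<tau> *v y \<in> Dset" "\<rho> \<ge> 0"
  shows "Sfun \<rho> y = transpose (permmat \<tau>) *v projD (permmat \<tau> *v y - \<rho> *\<^sub>R wvec)"
proof -
  have "Sfun \<rho> y = prox (penp 0 \<rho>) y" by (simp add: Sfun_def penp_def[abs_def])
  then show ?thesis using prox_penp_sorted[OF assms, of 0] by (simp add: soft_zero)
qed

lemma prox_penp_eq_soft_Sfun:
  fixes y :: "real^'n::{finite,wellorder}" and \<sigma> :: "real^'n::{finite,wellorder} \<Rightarrow> 'n::{finite,wellorder} \<Rightarrow> 'n::{finite,wellorder}"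
  assumes "sorter \<sigma>" "\<rho> \<ge> 0" "\<beta> \<ge> 0"
  shows "prox (penp \<beta> \<rho>) y = soft \<beta> (Sfun \<rho> y)"
  using assms prox_penp_sorted[OF assms(1), of "\<sigma> y"] Sfun_sorted[OF assms(1), of "\<sigma> y"]
  by (simp add: sorter_def transpose_permmat_soft)

section \<open>The multifunction \<open>\<M>\<close>\<close>

lemma eq_if_ties_in:
  fixes g :: "'n::{finite,wellorder} \<Rightarrow> real"
  assumes step: "\<forall>k\<in>K. g k = g (nxt k)"
    and ties: "\<forall>k\<in>brows. a $ k = a $ nxt k \<longrightarrow> k \<in> K"
    and aD: "a \<in> Dset" and eq: "a $ i = a $ j"
  shows "g i = g j"
proof -
  have ordered: "g i = g j" if "i \<le> j" "a $ i = a $ j" for i j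
    using that
  proof (induction j rule: less_induct)
    case (less j)
    show ?case
    proof (cases "i = j")
      case False
      then have "i < j" using less.prems(1) by simp
      then obtain p where p: "i \<le> p" "p \<in> brows" "nxt p = j"
        using ex_nxt_eq by blast
      have "p < j" using less_nxt[OF p(2)] p(3) by simp
      have "a $ j \<le> a $ p" "a $ p \<le> a $ i"
        using aD \<open>p < j\<close> p(1) by (simp_all add: Dset_iff)
      then have api: "a $ p = a $ i" using less.prems(2) by simp
      have "g i = g p" using less.IH[OF \<open>p < j\<close> p(1) api[symmetric]] .
      moreover have "p \<in> K" using ties p(2,3) api less.prems(2) by simp
      then have "g p = g j" using step p(3) by blast
      ultimately show ?thesis by simp
    qed simp
  qed
  show ?thesis
  proof (cases "i \<le> j")
    case True
    then show ?thesis using ordered eq by blast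
  next
    case False
    then show ?thesis using ordered[of j i] eq by simp
  qed
qed

lemma ties_in_KD:
  assumes "\<rho> > 0" "K \<in> KD (a - \<rho> *\<^sub>R wvec)" "k \<in> brows" "a $ k = a $ nxt k"
  shows "k \<in> K"
proof -
  have "(a - \<rho> *\<^sub>R wvec) $ k < (a - \<rho> *\<^sub>R wvec) $ nxt k"
    using wvec_step[OF assms(3)] assms(1,4) by (simp add: algebra_simps)
  then show ?thesis
    using multD_nonzero_of_less[OF assms(3)] assms(2) by (auto simp: KD_iff)
qed

definition QP :: "('n::{finite,wellorder} \<Rightarrow> 'n::{finite,wellorder}) \<Rightarrow> 'n::{finite,wellorder} set \<Rightarrow> real^'n::{finite,wellorder}^'n::{finite,wellorder}" where
  "QP \<tau> K = transpose (permmat \<tau>) ** projK K ** permmat \<tau>"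

lemma QP_mv: "QP \<tau> K *v z = transpose (permmat \<tau>) *v (projK K *v (permmat \<tau> *v z))"
  by (simp add: QP_def matrix_vector_mul_assoc matrix_mul_assoc)

lemma QP_symmetric: "K \<subseteq> brows \<Longrightarrow> transpose (QP \<tau> K) = QP \<tau> K"
  by (simp add: QP_def matrix_transpose_mul projK_symmetric matrix_mul_assoc)

lemma QP_idempotent:
  assumes "K \<subseteq> brows" "\<tau> permutes UNIV"
  shows "QP \<tau> K ** QP \<tau> K = QP \<tau> K"
  using mv_idem[OF projK_idempotent[OF assms(1)]]
  by (intro matrix_eq_by_mv) (simp add: QP_mv transpose_permmat_cancel(2)[OF assms(2)])

lemma QP_fixed_iff:
  assumes K: "K \<subseteq> brows" and \<tau>: "\<tau> permutes UNIV"
  shows "QP \<tau> K *v z = z \<longleftrightarrow> (\<forall>k\<in>K. z $ \<tau> k = z $ \<tau> (nxt k))"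
proof -
  have "QP \<tau> K *v z = z \<longleftrightarrow> projK K *v (permmat \<tau> *v z) = permmat \<tau> *v z"
  proof
    assume "QP \<tau> K *v z = z"
    then have "permmat \<tau> *v (QP \<tau> K *v z) = permmat \<tau> *v z" by simp
    then show "projK K *v (permmat \<tau> *v z) = permmat \<tau> *v z"
      by (simp add: QP_mv transpose_permmat_cancel(2)[OF \<tau>])
  qed (simp add: QP_mv transpose_permmat_cancel(1)[OF \<tau>])
  also have "\<dots> \<longleftrightarrow> (\<forall>k\<in>K. z $ \<tau> k = z $ \<tau> (nxt k))"
    by (simp add: projK_fixed_iff[OF K] permmat_mv)
  finally show ?thesis .
qed

text \<open>Two permutations sorting \<open>y\<close> differ only within blocks of ties of the sorted vector;
  once \<open>K\<close> contains all ties, they give the same \<open>QP\<close>.\<close>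

lemma permmat_eq_if_ties_in:
  assumes \<tau>1: "\<tau>1 permutes UNIV" and \<tau>2: "\<tau>2 permutes UNIV"
    and y: "permmat \<tau>1 *v y = a" "permmat \<tau>2 *v y = a" "a \<in> Dset"
    and ties: "\<forall>k\<in>brows. a $ k = a $ nxt k \<longrightarrow> k \<in> K"
    and z: "\<forall>k\<in>K. z $ \<tau>1 k = z $ \<tau>1 (nxt k)"
  shows "permmat \<tau>2 *v z = permmat \<tau>1 *v z"
proof -
  have "z $ \<tau>2 j = z $ \<tau>1 j" for j
  proof -
    define i where "i = inv \<tau>1 (\<tau>2 j)"
    have \<tau>i: "\<tau>1 i = \<tau>2 j" unfolding i_def by (simp add: permutes_inverses[OF \<tau>1])
    have "a $ i = y $ \<tau>1 i" "a $ j = y $ \<tau>2 j"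
      using y(1,2) by (simp_all add: permmat_mv vec_eq_iff)
    then have "a $ i = a $ j" using \<tau>i by simp
    then have "z $ \<tau>1 i = z $ \<tau>1 j"
      by (rule eq_if_ties_in[where g = "\<lambda>i. z $ \<tau>1 i", OF z ties y(3)])
    with \<tau>i show ?thesis by simp
  qed
  then show ?thesis by (simp add: permmat_mv)
qed

lemma QP_eq_if_ties_in:
  fixes K :: "'n::{finite,wellorder} set"
  assumes K: "K \<subseteq> brows" and \<tau>1: "\<tau>1 permutes UNIV" and \<tau>2: "\<tau>2 permutes UNIV"
    and y: "permmat \<tau>1 *v y = a" "permmat \<tau>2 *v y = a" "a \<in> Dset"
    and ties: "\<forall>k\<in>brows. a $ k = a $ nxt k \<longrightarrow> k \<in> K"
  shows "QP \<tau>1 K = QP \<tau>2 K"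
proof (rule symmetric_idempotent_eqI[OF QP_symmetric[OF K] QP_idempotent[OF K \<tau>1]
      QP_symmetric[OF K] QP_idempotent[OF K \<tau>2]])
  fix z :: "real^'n::{finite,wellorder}"
  have transfer: "\<forall>k\<in>K. z $ \<tau>' k = z $ \<tau>' (nxt k)"
    if "\<forall>k\<in>K. z $ \<tau> k = z $ \<tau> (nxt k)" "permmat \<tau>' *v z = permmat \<tau> *v z"
    for \<tau> \<tau>' :: "'n::{finite,wellorder} \<Rightarrow> 'n::{finite,wellorder}"
  proof -
    have h: "z $ \<tau>' i = z $ \<tau> i" for i
      using that(2) by (simp add: permmat_mv vec_eq_iff)
    show ?thesis unfolding h by (rule that(1))
  qed
  have "(\<forall>k\<in>K. z $ \<tau>1 k = z $ \<tau>1 (nxt k)) \<longleftrightarrow> (\<forall>k\<in>K. z $ \<tau>2 k = z $ \<tau>2 (nxt k))"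
    using transfer permmat_eq_if_ties_in[OF \<tau>1 \<tau>2 y ties, of z]
      permmat_eq_if_ties_in[OF \<tau>2 \<tau>1 y(2,1,3) ties, of z] by blast
  then show "QP \<tau>1 K *v z = z \<longleftrightarrow> QP \<tau>2 K *v z = z"
    by (simp add: QP_fixed_iff[OF K \<tau>1] QP_fixed_iff[OF K \<tau>2])
qed

definition soft_bjac :: "real \<Rightarrow> real^'n::{finite,wellorder} \<Rightarrow> ('n \<Rightarrow> real) \<Rightarrow> bool" where
  "soft_bjac \<beta> \<eta> q \<longleftrightarrow> (\<forall>i. (\<bar>\<eta>$i\<bar> < \<beta> \<longrightarrow> q i = 0) \<and> (\<bar>\<eta>$i\<bar> = \<beta> \<longrightarrow> q i \<in> {0,1})
     \<and> (\<bar>\<eta>$i\<bar> > \<beta> \<longrightarrow> q i = 1))"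

lemma soft_bjac_01: "soft_bjac \<beta> \<eta> q \<Longrightarrow> q i \<in> {0, 1}"
  unfolding soft_bjac_def by (metis insertI1 insertI2 linorder_neqE_linordered_idom)

lemma Mset_iff:
  "M \<in> Mset \<beta> \<rho> \<sigma> u \<longleftrightarrow> (\<exists>q K. M = diagm q ** QP (\<sigma> u) K \<and> soft_bjac \<beta> (Sfun \<rho> u) q
      \<and> K \<in> KD (permmat (\<sigma> u) *v u - \<rho> *\<^sub>R wvec) \<and> transpose M = M)"
  unfolding Mset_def dBprox_l1_def QS_def QD_def QP_def soft_bjac_def diagm_def by blast

lemma Mset_nonempty:
  fixes y :: "real^'n::{finite,wellorder}"
  assumes "\<rho> \<ge> 0" and srt: "sorter \<sigma>"
  shows "Mset \<beta> \<rho> \<sigma> y \<noteq> {}"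
proof -
  define \<tau> where "\<tau> = \<sigma> y"
  have \<tau>: "\<tau> permutes UNIV" "permmat \<tau> *v y \<in> Dset"
    using srt by (auto simp: sorter_def \<tau>_def)
  define v where "v = permmat \<tau> *v y - \<rho> *\<^sub>R wvec"
  define K where "K = {i. multD v $ i \<noteq> 0}"
  have "K \<in> KD v" unfolding K_def by (rule support_multD_in_KD)
  then have K: "K \<subseteq> brows" by (rule KD_subset_brows)
  define S where "S = Sfun \<rho> y"
  have S: "S $ \<tau> j = projD v $ j" for j
    using Sfun_sorted[OF srt \<tau> \<open>\<rho> \<ge> 0\<close>]
    by (simp add: S_def v_def transpose_permmat_mv[OF \<tau>(1)] permutes_inverses[OF \<tau>(1)])
  define q where "q i = (if \<bar>S $ i\<bar> > \<beta> then 1 else (0::real))" for i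
  have "soft_bjac \<beta> S q" unfolding soft_bjac_def q_def by auto
  txt \<open>\<open>q\<close> is constant on the blocks of \<open>K\<close>, because \<open>K\<close> is active at the projection.\<close>
  have "q (\<tau> k) = q (\<tau> (nxt k))" if "k \<in> K" for k
  proof -
    have "Brow k \<bullet> projD v = 0" using that multD_nonzero_in_ID[of v k] by (simp add: K_def ID_def)
    then show ?thesis using that K by (simp add: q_def S Brow_inner subset_iff)
  qed
  then have "QP \<tau> K *v (diagm q *v z) = diagm q *v z" if "QP \<tau> K *v z = z" for z
    using that by (simp add: QP_fixed_iff[OF K \<tau>(1)] diagm_mv)
  then have "transpose (diagm q ** QP \<tau> K) = diagm q ** QP \<tau> K"
    by (rule symmetric_mult_if_invariant[OF QP_symmetric[OF K] QP_idempotent[OF K \<tau>(1)] transpose_diagm])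
  then have "diagm q ** QP \<tau> K \<in> Mset \<beta> \<rho> \<sigma> y"
    unfolding Mset_iff using \<open>soft_bjac \<beta> S q\<close> \<open>K \<in> KD v\<close> by (auto simp: \<tau>_def S_def v_def)
  then show ?thesis by auto
qed

lemma finite_Mset: "finite (Mset \<beta> \<rho> \<sigma> (y::real^'n::{finite,wellorder}))"
proof -
  let ?f = "\<lambda>(A, K). diagm (\<lambda>i. if i \<in> A then 1 else 0) ** QP (\<sigma> y) K"
  have "Mset \<beta> \<rho> \<sigma> y \<subseteq> range ?f"
  proof
    fix M assume "M \<in> Mset \<beta> \<rho> \<sigma> y"
    then obtain q K where M: "M = diagm q ** QP (\<sigma> y) K" and "soft_bjac \<beta> (Sfun \<rho> y) q"
      unfolding Mset_iff by blast
    then have "q = (\<lambda>i. if i \<in> {i. q i = 1} then 1 else 0)"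
      using soft_bjac_01 by (fastforce simp: fun_eq_iff)
    then have "M = ?f ({i. q i = 1}, K)" using M by simp
    then show "M \<in> range ?f" by blast
  qed
  then show ?thesis by (rule finite_subset) simp
qed

lemma Mset_symmetric_idempotent:
  assumes "M \<in> Mset \<beta> \<rho> \<sigma> y" and srt: "sorter \<sigma>"
  shows "transpose M = M" "M ** M = M"
proof -
  obtain q K where M: "M = diagm q ** QP (\<sigma> y) K" and q: "soft_bjac \<beta> (Sfun \<rho> y) q"
    and KD: "K \<in> KD (permmat (\<sigma> y) *v y - \<rho> *\<^sub>R wvec)" and sym: "transpose M = M"
    using assms(1) unfolding Mset_iff by blast
  have K: "K \<subseteq> brows" by (rule KD_subset_brows[OF KD])
  have \<tau>: "\<sigma> y permutes UNIV" using srt by (simp add: sorter_def)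
  show "transpose M = M" by (fact sym)
  show "M ** M = M"
    unfolding M
    by (rule idempotent_mult_if_symmetric[OF QP_symmetric[OF K] QP_idempotent[OF K \<tau>]
          transpose_diagm diagm_idempotent[OF soft_bjac_01[OF q]] sym[unfolded M]])
qed

section \<open>Local behaviour\<close>

lemma finite_pos_lower_bound:
  fixes f :: "'a::finite \<Rightarrow> real"
  assumes "\<And>i. P i \<Longrightarrow> 0 < f i"
  shows "\<exists>e>0. \<forall>i. P i \<longrightarrow> e \<le> f i"
proof -
  have "0 < Min (insert 1 (f ` {i. P i}))" using assms by (subst Min_gr_iff) auto
  then show ?thesis by (intro exI[of _ "Min (insert 1 (f ` {i. P i}))"]) auto
qed

lemma component_diff_le_norm: "\<bar>x $ i - y $ i\<bar> \<le> norm (x - y)"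
  using component_le_norm_cart[of "x - y" i] by simp

text \<open>Strict inequalities among the components of \<open>y\<close> survive small perturbations, so a
  permutation sorting a nearby vector also sorts \<open>y\<close>.\<close>

lemma sorting_locally_stable:
  assumes \<tau>y: "\<tau>y permutes UNIV" "permmat \<tau>y *v y \<in> Dset"
  shows "\<exists>\<delta>>0. \<forall>u \<tau>. norm (u - y) < \<delta> \<longrightarrow> \<tau> permutes UNIV \<longrightarrow> permmat \<tau> *v u \<in> Dset
           \<longrightarrow> permmat \<tau> *v y = permmat \<tau>y *v y"
proof -
  obtain e where e: "e > 0" "\<And>i j. y $ i < y $ j \<Longrightarrow> e \<le> y $ j - y $ i"
    using finite_pos_lower_bound[of "\<lambda>(i, j). y $ i < y $ j" "\<lambda>(i, j). y $ j - y $ i"] by auto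
  have "permmat \<tau> *v y = permmat \<tau>y *v y"
    if u: "norm (u - y) < e / 2" and \<tau>: "\<tau> permutes UNIV" "permmat \<tau> *v u \<in> Dset" for u \<tau>
  proof -
    have "y $ \<tau> j \<le> y $ \<tau> i" if "i \<le> j" for i j
    proof (rule ccontr)
      assume "\<not> y $ \<tau> j \<le> y $ \<tau> i"
      then have "e \<le> y $ \<tau> j - y $ \<tau> i" using e(2) by simp
      moreover have "u $ \<tau> j \<le> u $ \<tau> i" using \<tau>(2) \<open>i \<le> j\<close> by (simp add: Dset_iff permmat_mv)
      moreover note component_diff_le_norm[of u "\<tau> i" y] component_diff_le_norm[of u "\<tau> j" y]
      ultimately show False using u by linarith
    qed
    then have "permmat \<tau> *v y \<in> Dset" by (simp add: Dset_iff permmat_mv)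
    moreover have "permmat \<tau> *v y = permmat (inv \<tau>y \<circ> \<tau>) *v (permmat \<tau>y *v y)"
      by (simp add: vec_eq_iff permmat_mv permutes_inverses[OF \<tau>y(1)])
    ultimately show ?thesis
      using permmat_Dset_eq[OF \<tau>y(2)] permutes_compose[OF \<tau>(1) permutes_inv[OF \<tau>y(1)]] by simp
  qed
  then show ?thesis using e(1) by (intro exI[of _ "e / 2"]) auto
qed

text \<open>The multiplier is continuous and the constraint values are continuous, so near \<open>v\<close>
  the support of the multiplier can only grow and the active set can only shrink.\<close>

lemma KD_locally_decreasing:
  fixes v :: "real^'n::{finite,wellorder}"
  shows "\<exists>\<delta>>0. \<forall>v'. norm (v' - v) < \<delta> \<longrightarrow> KD v' \<subseteq> KD v"
proof -
  obtain e1 where e1: "e1 > 0" "\<And>k. multD v $ k \<noteq> 0 \<Longrightarrow> e1 \<le> \<bar>multD v $ k\<bar>"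
    using finite_pos_lower_bound[of "\<lambda>k. multD v $ k \<noteq> 0" "\<lambda>k. \<bar>multD v $ k\<bar>"] by auto
  obtain e2 where e2: "e2 > 0" "\<And>k. 0 < Brow k \<bullet> projD v \<Longrightarrow> e2 \<le> Brow k \<bullet> projD v"
    using finite_pos_lower_bound[of "\<lambda>k. 0 < Brow k \<bullet> projD v" "\<lambda>k. Brow k \<bullet> projD v"] by auto
  define n where "n = real CARD('n)"
  have "n \<ge> 1" by (simp add: n_def)
  define \<delta> where "\<delta> = min (e1 / (4 * n)) (e2 / 4)"
  have "\<delta> > 0" using e1 e2 \<open>n \<ge> 1\<close> by (simp add: \<delta>_def)
  have "4 * n * \<delta> \<le> e1" "4 * \<delta> \<le> e2"
    using \<open>n \<ge> 1\<close> by (auto simp: \<delta>_def field_simps min_def)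
  then have \<delta>: "2 * n * \<delta> < e1" "2 * \<delta> < e2"
    using \<open>\<delta> > 0\<close> \<open>n \<ge> 1\<close> e1 e2 by (auto simp: mult_pos_pos)
  have "K \<in> KD v" if v': "norm (v' - v) < \<delta>" and K: "K \<in> KD v'" for v' K
  proof -
    have "multD v' $ k \<noteq> 0" if "multD v $ k \<noteq> 0" for k
    proof -
      have "\<bar>multD v' $ k - multD v $ k\<bar> \<le> 2 * n * norm (v' - v)"
        unfolding n_def by (rule multD_lipschitz)
      also have "\<dots> \<le> 2 * n * \<delta>" using v' \<open>n \<ge> 1\<close> by simp
      finally show ?thesis using e1(2)[OF that] \<delta>(1) by linarith
    qed
    then have "{i. multD v $ i \<noteq> 0} \<subseteq> K" using K by (auto simp: KD_iff)
    moreover have "k \<in> ID v" if "k \<in> K" for k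
    proof -
      have k: "k \<in> brows" "Brow k \<bullet> projD v' = 0" using K that by (auto simp: KD_iff ID_def)
      have "norm (projD v' - projD v) < \<delta>" using projD_lipschitz[of v' v] v' by simp
      then have "\<bar>Brow k \<bullet> projD v - Brow k \<bullet> projD v'\<bar> < e2"
        using component_diff_le_norm[of "projD v'" k "projD v"]
          component_diff_le_norm[of "projD v'" "nxt k" "projD v"] \<delta>(2)
        by (simp add: Brow_inner[OF k(1)])
      then have "Brow k \<bullet> projD v = 0"
        using e2(2)[of k] Brow_projD_nonneg[OF k(1), of v] k(2) by fastforce
      then show ?thesis using k(1) by (simp add: ID_def)
    qed
    ultimately show ?thesis by (auto simp: KD_iff)
  qed
  then show ?thesis using \<open>\<delta> > 0\<close> by blast
qed

lemma softf_locally_linear: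
  assumes "\<beta> > 0" "\<bar>s' - s\<bar> < \<beta>" "\<bar>s\<bar> \<noteq> \<beta> \<longrightarrow> \<bar>s' - s\<bar> < \<bar>\<bar>s\<bar> - \<beta>\<bar>"
    and q: "(\<bar>s'\<bar> < \<beta> \<longrightarrow> q = 0) \<and> (\<bar>s'\<bar> = \<beta> \<longrightarrow> q \<in> {0,1}) \<and> (\<bar>s'\<bar> > \<beta> \<longrightarrow> q = 1)"
  shows "(\<bar>s\<bar> < \<beta> \<longrightarrow> q = 0) \<and> (\<bar>s\<bar> = \<beta> \<longrightarrow> q \<in> {0,1}) \<and> (\<bar>s\<bar> > \<beta> \<longrightarrow> q = 1)"
    and "softf \<beta> s' - softf \<beta> s = q * (s' - s)"
proof -
  have "q \<in> {0, 1}" using q by (metis insertI1 insertI2 linorder_neqE_linordered_idom)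
  with assms show "(\<bar>s\<bar> < \<beta> \<longrightarrow> q = 0) \<and> (\<bar>s\<bar> = \<beta> \<longrightarrow> q \<in> {0,1}) \<and> (\<bar>s\<bar> > \<beta> \<longrightarrow> q = 1)"
    and "softf \<beta> s' - softf \<beta> s = q * (s' - s)"
    unfolding softf_def by (auto simp: abs_if split: if_splits)
qed

text \<open>Soft-thresholding is piecewise linear, and near \<open>s\<close> only the pieces meeting at \<open>s\<close>
  are visible.\<close>

lemma soft_locally_linear:
  fixes s :: "real^'n::{finite,wellorder}"
  assumes "\<beta> > 0"
  shows "\<exists>\<delta>>0. \<forall>s' q. norm (s' - s) < \<delta> \<longrightarrow> soft_bjac \<beta> s' q \<longrightarrow>
           soft_bjac \<beta> s q \<and> soft \<beta> s' - soft \<beta> s = diagm q *v (s' - s)"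
proof -
  obtain e where e: "e > 0" "\<And>i. \<bar>s $ i\<bar> \<noteq> \<beta> \<Longrightarrow> e \<le> \<bar>\<bar>s $ i\<bar> - \<beta>\<bar>"
    using finite_pos_lower_bound[of "\<lambda>i. \<bar>s $ i\<bar> \<noteq> \<beta>" "\<lambda>i. \<bar>\<bar>s $ i\<bar> - \<beta>\<bar>"] by auto
  have "soft_bjac \<beta> s q \<and> soft \<beta> s' - soft \<beta> s = diagm q *v (s' - s)"
    if "norm (s' - s) < min e \<beta>" "soft_bjac \<beta> s' q" for s' q
  proof -
    have "\<bar>s' $ i - s $ i\<bar> < min e \<beta>" for i
      using component_diff_le_norm[of s' i s] that(1) by linarith
    then have "(\<bar>s $ i\<bar> < \<beta> \<longrightarrow> q i = 0) \<and> (\<bar>s $ i\<bar> = \<beta> \<longrightarrow> q i \<in> {0,1}) \<and> (\<bar>s $ i\<bar> > \<beta> \<longrightarrow> q i = 1)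
        \<and> softf \<beta> (s' $ i) - softf \<beta> (s $ i) = q i * (s' $ i - s $ i)" for i
    proof -
      have "\<bar>s' $ i - s $ i\<bar> < \<beta>" "\<bar>s $ i\<bar> \<noteq> \<beta> \<longrightarrow> \<bar>s' $ i - s $ i\<bar> < \<bar>\<bar>s $ i\<bar> - \<beta>\<bar>"
        using \<open>\<bar>s' $ i - s $ i\<bar> < min e \<beta>\<close> e(2)[of i] by auto
      moreover have "(\<bar>s' $ i\<bar> < \<beta> \<longrightarrow> q i = 0) \<and> (\<bar>s' $ i\<bar> = \<beta> \<longrightarrow> q i \<in> {0,1})
          \<and> (\<bar>s' $ i\<bar> > \<beta> \<longrightarrow> q i = 1)"
        using that(2) by (simp add: soft_bjac_def)
      ultimately show ?thesis using softf_locally_linear[OF assms] by blast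
    qed
    then show ?thesis by (simp add: soft_bjac_def soft_def diagm_mv vec_eq_iff)
  qed
  then show ?thesis using e(1) assms by (intro exI[of _ "min e \<beta>"]) auto
qed

lemma Sfun_diff_same_sorting:
  fixes \<rho> :: real and y u :: "real^'n::{finite,wellorder}"
    and \<sigma> :: "real^'n::{finite,wellorder} \<Rightarrow> 'n::{finite,wellorder} \<Rightarrow> 'n::{finite,wellorder}"
  defines "v \<equiv> permmat (\<sigma> y) *v y - \<rho> *\<^sub>R wvec" and "vu \<equiv> permmat (\<sigma> u) *v u - \<rho> *\<^sub>R wvec"
  assumes "\<rho> \<ge> 0" and srt: "sorter \<sigma>" and sort: "permmat (\<sigma> u) *v y = permmat (\<sigma> y) *v y"
  shows "vu - v = permmat (\<sigma> u) *v (u - y)"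
    and "Sfun \<rho> u - Sfun \<rho> y = transpose (permmat (\<sigma> u)) *v (projD vu - projD v)"
proof -
  have \<tau>u: "\<sigma> u permutes UNIV" "permmat (\<sigma> u) *v u \<in> Dset"
    and "permmat (\<sigma> y) *v y \<in> Dset"
    using srt by (auto simp: sorter_def)
  show "vu - v = permmat (\<sigma> u) *v (u - y)"
    by (simp add: v_def vu_def sort[symmetric] matrix_vector_mult_diff_distrib)
  show "Sfun \<rho> u - Sfun \<rho> y = transpose (permmat (\<sigma> u)) *v (projD vu - projD v)"
    using Sfun_sorted[OF srt \<tau>u \<open>\<rho> \<ge> 0\<close>] Sfun_sorted[OF srt \<tau>u(1) _ \<open>\<rho> \<ge> 0\<close>, of y]
      sort \<open>permmat (\<sigma> y) *v y \<in> Dset\<close>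
    by (simp add: v_def vu_def matrix_vector_mult_diff_distrib)
qed

lemma Mset_subset_and_exact:
  fixes \<rho> :: real and y u :: "real^'n::{finite,wellorder}"
    and \<sigma> :: "real^'n::{finite,wellorder} \<Rightarrow> 'n::{finite,wellorder} \<Rightarrow> 'n::{finite,wellorder}"
  defines "v \<equiv> permmat (\<sigma> y) *v y - \<rho> *\<^sub>R wvec" and "vu \<equiv> permmat (\<sigma> u) *v u - \<rho> *\<^sub>R wvec"
  assumes "\<rho> > 0" "\<beta> \<ge> 0" and srt: "sorter \<sigma>"
    and sort: "permmat (\<sigma> u) *v y = permmat (\<sigma> y) *v y"
    and KD: "KD vu \<subseteq> KD v"
    and soft: "\<And>q. soft_bjac \<beta> (Sfun \<rho> u) q \<Longrightarrow> soft_bjac \<beta> (Sfun \<rho> y) q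
       \<and> soft \<beta> (Sfun \<rho> u) - soft \<beta> (Sfun \<rho> y) = diagm q *v (Sfun \<rho> u - Sfun \<rho> y)"
    and M: "M \<in> Mset \<beta> \<rho> \<sigma> u"
  shows "M \<in> Mset \<beta> \<rho> \<sigma> y" and "prox (penp \<beta> \<rho>) u - prox (penp \<beta> \<rho>) y = M *v (u - y)"
proof -
  have \<tau>: "\<sigma> y permutes UNIV" "permmat (\<sigma> y) *v y \<in> Dset" and \<tau>u: "\<sigma> u permutes UNIV"
    using srt by (auto simp: sorter_def)
  obtain q K where M_eq: "M = diagm q ** QP (\<sigma> u) K" and q: "soft_bjac \<beta> (Sfun \<rho> u) q"
    and "K \<in> KD vu" and sym: "transpose M = M"
    using M unfolding Mset_iff vu_def by blast
  then have "K \<in> KD v" using KD by blast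
  then have K: "K \<subseteq> brows" by (rule KD_subset_brows)
  have "QP (\<sigma> u) K = QP (\<sigma> y) K"
    using \<open>K \<in> KD v\<close> \<open>\<rho> > 0\<close> unfolding v_def
    by (intro QP_eq_if_ties_in[OF K \<tau>u \<tau>(1) sort refl \<tau>(2)]) (blast intro: ties_in_KD)
  moreover have "soft_bjac \<beta> (Sfun \<rho> y) q" using soft[OF q] by blast
  ultimately show "M \<in> Mset \<beta> \<rho> \<sigma> y"
    unfolding Mset_iff using \<open>K \<in> KD v\<close> sym
    by (intro exI[of _ q] exI[of _ K]) (simp add: M_eq v_def)
  note diff = Sfun_diff_same_sorting[OF less_imp_le[OF \<open>\<rho> > 0\<close>] srt sort, folded v_def vu_def]
  have "QP (\<sigma> u) K *v (u - y) = transpose (permmat (\<sigma> u)) *v (projK K *v (vu - v))"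
    by (simp add: QP_mv diff(1))
  also have "\<dots> = Sfun \<rho> u - Sfun \<rho> y"
    using projK_eq_projD[OF \<open>K \<in> KD vu\<close>] projK_eq_projD[OF \<open>K \<in> KD v\<close>]
    by (simp add: diff(2) matrix_vector_mult_diff_distrib)
  finally have "M *v (u - y) = diagm q *v (Sfun \<rho> u - Sfun \<rho> y)"
    by (simp add: M_eq matrix_vector_mul_assoc[symmetric])
  then show "prox (penp \<beta> \<rho>) u - prox (penp \<beta> \<rho>) y = M *v (u - y)"
    using soft[OF q] prox_penp_eq_soft_Sfun[OF srt] \<open>\<rho> > 0\<close> \<open>\<beta> \<ge> 0\<close> by simp
qed

lemma Mset_locally:
  fixes y :: "real^'n::{finite,wellorder}"
    and \<sigma> :: "real^'n::{finite,wellorder} \<Rightarrow> 'n::{finite,wellorder} \<Rightarrow> 'n::{finite,wellorder}"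
  assumes "\<beta> > 0" "\<rho> > 0" and srt: "sorter \<sigma>"
  shows "\<exists>\<delta>>0. \<forall>u\<in>ball y \<delta>. Mset \<beta> \<rho> \<sigma> u \<subseteq> Mset \<beta> \<rho> \<sigma> y \<and>
     (\<forall>M\<in>Mset \<beta> \<rho> \<sigma> u. prox (penp \<beta> \<rho>) u - prox (penp \<beta> \<rho>) y - M *v (u - y) = 0)"
proof -
  define v where "v = permmat (\<sigma> y) *v y - \<rho> *\<^sub>R wvec"
  have \<tau>: "\<sigma> y permutes UNIV" "permmat (\<sigma> y) *v y \<in> Dset"
    using srt by (auto simp: sorter_def)
  obtain \<delta>1 where "\<delta>1 > 0" and \<delta>1: "\<And>u \<tau>. norm (u - y) < \<delta>1 \<Longrightarrow> \<tau> permutes UNIV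
      \<Longrightarrow> permmat \<tau> *v u \<in> Dset \<Longrightarrow> permmat \<tau> *v y = permmat (\<sigma> y) *v y"
    using sorting_locally_stable[OF \<tau>] by blast
  obtain \<delta>2 where "\<delta>2 > 0" and \<delta>2: "\<And>v'. norm (v' - v) < \<delta>2 \<Longrightarrow> KD v' \<subseteq> KD v"
    using KD_locally_decreasing[of v] by blast
  obtain \<delta>3 where "\<delta>3 > 0" and \<delta>3: "\<And>s' q. norm (s' - Sfun \<rho> y) < \<delta>3 \<Longrightarrow> soft_bjac \<beta> s' q
      \<Longrightarrow> soft_bjac \<beta> (Sfun \<rho> y) q \<and> soft \<beta> s' - soft \<beta> (Sfun \<rho> y) = diagm q *v (s' - Sfun \<rho> y)"
    using soft_locally_linear[OF \<open>\<beta> > 0\<close>, of "Sfun \<rho> y"] by blast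
  have "Mset \<beta> \<rho> \<sigma> u \<subseteq> Mset \<beta> \<rho> \<sigma> y \<and>
      (\<forall>M\<in>Mset \<beta> \<rho> \<sigma> u. prox (penp \<beta> \<rho>) u - prox (penp \<beta> \<rho>) y - M *v (u - y) = 0)"
    if u: "norm (u - y) < min \<delta>1 (min \<delta>2 \<delta>3)" for u
  proof -
    define vu where "vu = permmat (\<sigma> u) *v u - \<rho> *\<^sub>R wvec"
    have \<tau>u: "\<sigma> u permutes UNIV" "permmat (\<sigma> u) *v u \<in> Dset"
      using srt by (auto simp: sorter_def)
    have sort: "permmat (\<sigma> u) *v y = permmat (\<sigma> y) *v y"
      using \<delta>1[OF _ \<tau>u] u by simp
    note diff = Sfun_diff_same_sorting[OF less_imp_le[OF \<open>\<rho> > 0\<close>] srt sort, folded v_def vu_def]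
    have "norm (vu - v) = norm (u - y)"
      using norm_permmat[OF \<tau>u(1), of "u - y"] by (simp add: diff(1))
    then have "norm (Sfun \<rho> u - Sfun \<rho> y) \<le> norm (u - y)"
      using projD_lipschitz[of vu v] by (simp add: diff(2) norm_transpose_permmat[OF \<tau>u(1)])
    then have "soft_bjac \<beta> (Sfun \<rho> y) q
        \<and> soft \<beta> (Sfun \<rho> u) - soft \<beta> (Sfun \<rho> y) = diagm q *v (Sfun \<rho> u - Sfun \<rho> y)"
      if "soft_bjac \<beta> (Sfun \<rho> u) q" for q
      using \<delta>3[OF _ that] u by simp
    moreover have "KD vu \<subseteq> KD v" using \<delta>2 u \<open>norm (vu - v) = norm (u - y)\<close> by simp
    ultimately show ?thesis
      using Mset_subset_and_exact[OF \<open>\<rho> > 0\<close> less_imp_le[OF \<open>\<beta> > 0\<close>] srt sort]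
      unfolding v_def vu_def by auto
  qed
  then show ?thesis using \<open>\<delta>1 > 0\<close> \<open>\<delta>2 > 0\<close> \<open>\<delta>3 > 0\<close>
    by (intro exI[of _ "min \<delta>1 (min \<delta>2 \<delta>3)"]) (auto simp: dist_norm norm_minus_commute)
qed

theorem theorem2p9:
  fixes \<beta> \<rho> :: real and y :: "real^'n::{finite,wellorder}"
    and \<sigma> :: "real^'n::{finite,wellorder} \<Rightarrow> 'n::{finite,wellorder} \<Rightarrow> 'n::{finite,wellorder}"
  assumes "\<beta> > 0" and "\<rho> > 0"
    and "\<And>z. \<sigma> z permutes UNIV"
    and "\<And>z i j. i \<le> j \<Longrightarrow> z $ (\<sigma> z j) \<le> z $ (\<sigma> z i)"
  shows "Mset \<beta> \<rho> \<sigma> y \<noteq> {} \<and> compact (Mset \<beta> \<rho> \<sigma> y)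
    \<and> (\<forall>V. open V \<and> Mset \<beta> \<rho> \<sigma> y \<subseteq> V \<longrightarrow>
          (\<exists>U. open U \<and> y \<in> U \<and> (\<forall>u\<in>U. Mset \<beta> \<rho> \<sigma> u \<subseteq> V)))
    \<and> (\<forall>M\<in>Mset \<beta> \<rho> \<sigma> y. transpose M = M \<and> psd M
          \<and> transpose (mat 1 - M) = mat 1 - M \<and> psd (mat 1 - M))
    \<and> (\<exists>Y. open Y \<and> y \<in> Y \<and> (\<forall>u\<in>Y. \<forall>M\<in>Mset \<beta> \<rho> \<sigma> u.
          prox (penp \<beta> \<rho>) u - prox (penp \<beta> \<rho>) y - M *v (u - y) = 0))"
proof -
  have srt: "sorter \<sigma>" using assms(3,4) by (simp add: sorter_def Dset_iff permmat_mv)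
  obtain \<delta> where "\<delta> > 0" and near: "\<forall>u\<in>ball y \<delta>. Mset \<beta> \<rho> \<sigma> u \<subseteq> Mset \<beta> \<rho> \<sigma> y \<and>
      (\<forall>M\<in>Mset \<beta> \<rho> \<sigma> u. prox (penp \<beta> \<rho>) u - prox (penp \<beta> \<rho>) y - M *v (u - y) = 0)"
    using Mset_locally[OF assms(1,2) srt] by blast
  then have Y: "open (ball y \<delta>)" "y \<in> ball y \<delta>" by simp_all
  have "Mset \<beta> \<rho> \<sigma> y \<noteq> {}" by (rule Mset_nonempty[OF less_imp_le[OF assms(2)] srt])
  moreover have "compact (Mset \<beta> \<rho> \<sigma> y)" by (rule finite_imp_compact[OF finite_Mset])
  moreover have "\<exists>U. open U \<and> y \<in> U \<and> (\<forall>u\<in>U. Mset \<beta> \<rho> \<sigma> u \<subseteq> V)"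
    if "Mset \<beta> \<rho> \<sigma> y \<subseteq> V" for V
    using Y near that by (intro exI[of _ "ball y \<delta>"]) blast
  moreover have "transpose M = M \<and> psd M \<and> transpose (mat 1 - M) = mat 1 - M \<and> psd (mat 1 - M)"
    if "M \<in> Mset \<beta> \<rho> \<sigma> y" for M
    using Mset_symmetric_idempotent[OF that srt] symmetric_idempotent_compl[of M]
      psd_if_symmetric_idempotent[of M] psd_if_symmetric_idempotent[of "mat 1 - M"] by simp
  moreover have "\<exists>Y. open Y \<and> y \<in> Y \<and> (\<forall>u\<in>Y. \<forall>M\<in>Mset \<beta> \<rho> \<sigma> u.
      prox (penp \<beta> \<rho>) u - prox (penp \<beta> \<rho>) y - M *v (u - y) = 0)"
    using Y near by (intro exI[of _ "ball y \<delta>"]) blast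
  ultimately show ?thesis by (intro conjI allI impI ballI) auto
qed

end
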